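(* The algebra homomorphism $\psi_{n,r}:U_0(\mathfrak{gl}_n)\to\mathbf S_0(n,r)$ satisfies $\psi_{n,r}(\mathbf e_i)=e_i$ and $\psi_{n,r}(\mathbf f_i)=f_i$ for $1\le i\le n-1$, and $\psi_{n,r}(\mathbf k_i)=\sum_{\mu\in\Lambda(n,r),\ \mu_i=0}k_\mu$ for $1\le i\le n$.
   Context: The degenerate quantum group $U_0(\mathfrak{gl}_n)$ (Krob–Thibon) is the unital $\mathbb C$-algebra generated by $\mathbf e_i,\mathbf f_i$ ($1\le i\le n-1$) and $\mathbf k_i$ ($1\le i\le n$) subject to the relations: - $\mathbf k_i\mathbf k_j=\mathbf k_j\mathbf k_i$; - $\mathbf e_{i-1}\mathbf k_i=0$ and $\mathbf k_i\mathbf f_{i-1}=0$ ($2\le i\le n-1$); - $\mathbf k_i\mathbf e_i=0$ and $\mathbf f_i\mathbf k_i=0$; - $\mathbf k_i\mathbf e_j=\mathbf e_j\mathbf k_i$ and $\mathbf k_i\mathbf f_j=\mathbf f_j\mathbf k_i$ for $j\ne i-1,i$; - $[\mathbf e_i,\mathbf f_j]=\delta_{ij}(\mathbf k_{i+1}-\mathbf k_i)$; - $\mathbf e_i^2\mathbf e_{i+1}=\mathbf e_i\mathbf e_{i+1}\mathbf e_i=\mathbf e_{i+1}\mathbf e_i^2$ and $\mathbf f_{i+1}\mathbf f_i^2=\mathbf f_i\mathbf f_{i+1}\mathbf f_i=\mathbf f_i^2\mathbf f_{i+1}$; - $[\mathbf e_i,\mathbf e_j]=[\mathbf f_i,\mathbf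 f_j]=0$ for $|i-j|>1$; - $\mathbf e_i\mathbf e_{i+1}\mathbf k_i=\mathbf k_{i+1}\mathbf e_i\mathbf e_{i+1}$ and $\mathbf f_{i+1}\mathbf f_i\mathbf k_{i+1}=\mathbf k_i\mathbf f_{i+1}\mathbf f_i$. It is a bialgebra with $\Delta(\mathbf e_i)=1\otimes\mathbf e_i+\mathbf e_i\otimes\mathbf k_i$, $\Delta(\mathbf f_i)=\mathbf k_{i+1}\otimes\mathbf f_i+\mathbf f_i\otimes1$, $\Delta(\mathbf k_i)=\mathbf k_i\otimes\mathbf k_i$. It acts on $V_0=\mathbb C^n$ (basis $\bar\xi_1,\dots,\bar\xi_n$) by $\mathbf e_i\mapsto E_{i,i+1}$, $\mathbf f_i\mapsto E_{i+1,i}$, $\mathbf k_i\mapsto\sum_{j\ne i}E_{j,j}$, and hence on $V_0^{\otimes r}$ via the iterated coproduct. $\mathbf H_r(0)$ is the $0$-Hecke algebra (generators $\bar\pi_i$, $\bar\pi_i^2=-\bar\pi_i$, braid relations). It acts on the right of $V_0^{\otimes r}$: $\mathbf v\bar\pi_i$ equals $\mathbf v$ with factors $i,i+1$ swapped, $0$, or $-\mathbf v$, according as $k_i<k_{i+1}$, $k_i=k_{i+1}$, or $k_i>k_{i+1}$, where $\mathbf v=\bar\xi_{k_1}\otimes\dots\otimes\bar\xi_{k_r}$. This action commutes with the $U_0(\mathfrak{gl}_n)$-action. $\mathbf S_0(n,r)$, the complex $0$-Schur algebra with Jensen–Su basis $\{e_A\}_{A\in M_n(r)}$, is identified with $\mathrm{End}_{\mathbf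 H_r(0)}(V_0^{\otimes r})$ as follows. Let $\phi_0:\bigoplus_\lambda\bar x_\lambda\mathbf H_r(0)\cong V_0^{\otimes r}$, $\bar x_\lambda h\mapsto\bar\xi_{1}^{\otimes\lambda_1}\otimes\dots\otimes\bar\xi_n^{\otimes\lambda_n}h$, where $\bar x_\lambda=\sum_{w\in\mathfrak S_\lambda}\bar\pi_w$. Then $e_A$ corresponds to $\bar x_\nu h\mapsto\delta_{\mathrm{co}(A),\nu}\big(\sum_{x\in\mathfrak S_{\mathrm{ro}(A)}d_A\mathfrak S_{\mathrm{co}(A)}}\bar\pi_x\big)h$, where $d_A$ is the shortest element of the double coset $\mathfrak S_{\mathrm{ro}(A)}w_A\mathfrak S_{\mathrm{co}(A)}$ and $w_A\in\mathfrak S_r$ satisfies $a_{i,j}=|R_i^{\mathrm{ro}(A)}\cap w_AR_j^{\mathrm{co}(A)}|$, with $R_i^\lambda=\{x:\lambda_1+\dots+\lambda_{i-1}<x\le\lambda_1+\dots+\lambda_i\}$. $k_\mu=e_{\mathrm{diag}(\mu)}$, $e_i=\sum_\lambda e_{D_\lambda-E_{i+1,i+1}+E_{i,i+1}}$, $f_i=\sum_\lambda e_{D_\lambda-E_{i,i}+E_{i+1,i}}$ (sums over $\lambda\in\Lambda(n,r)$ with nonnegative matrices). $\psi_{n,r}$ is the homomorphism induced by the $U_0(\mathfrak{gl}_n)$-action on $V_0^{\otimes r}$, whose image lies in $\mathrm{End}_{\mathbf H_r(0)}(V_0^{\otimes r})\cong\mathbf S_0(n,r)$. *)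

theory Defs
  imports Complex_Main "HOL-Combinatorics.Permutations"
begin

text \<open>
  A basis tensor of V0^{\<otimes> r} (V0 = C^n with basis xi_1..xi_n) is
  a word w = [k_1,...,k_r] (a nat list of length r with entries in {1..n}).
  A vector of V0^{\<otimes> r} is a function word => complex (only values on
  words n r matter).  A linear endomorphism is given by the images of basis
  tensors: T :: word => vector, and it acts on vectors by zlin.
  Permutations of S_r are bijections of {1..r}; products are function
  compositions; s_i swaps i and i+1.  Compositions lambda in Lambda(n,r)
  are nat lists of length n summing to r, with lambda_i = lambda ! (i-1).
  Matrices A in M_n(r) are functions nat => nat => nat supported on
  {1..n} x {1..n}.
\<close>

type_synonym zword = "nat list"
type_synonym zvec = "zword \<Rightarrow> complex"
type_synonym zop = "zword \<Rightarrow> zvec"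

definition zwords :: "nat \<Rightarrow> nat \<Rightarrow> zword set" where
  "zwords n r = {w. length w = r \<and> set w \<subseteq> {1..n}}"

definition zbvec :: "zword \<Rightarrow> zvec" where
  "zbvec w = (\<lambda>u. if u = w then 1 else 0)"

definition zlin :: "nat \<Rightarrow> nat \<Rightarrow> zop \<Rightarrow> zvec \<Rightarrow> zvec" where
  "zlin n r T v = (\<lambda>u. \<Sum>w\<in>zwords n r. v w * T w u)"

section \<open>The right action of the 0-Hecke algebra H_r(0) on V0^{\<otimes> r}\<close>

text \<open>v pi_i on a basis tensor (i is 1-based: factors i, i+1 = list positions i-1, i)\<close>
definition hgen_basis :: "nat \<Rightarrow> zop" where
  "hgen_basis i w =
     (if w ! (i - 1) < w ! i then zbvec (w[i - 1 := w ! i, i := w ! (i - 1)])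
      else if w ! (i - 1) = w ! i then (\<lambda>_. 0)
      else (\<lambda>u. - zbvec w u))"

definition hgen :: "nat \<Rightarrow> nat \<Rightarrow> nat \<Rightarrow> zvec \<Rightarrow> zvec" where
  "hgen n r i v = zlin n r (hgen_basis i) v"

definition sref :: "nat \<Rightarrow> nat \<Rightarrow> nat" where
  "sref i = (\<lambda>x. if x = i then i + 1 else if x = i + 1 then i else x)"

definition perm_word :: "nat \<Rightarrow> nat list \<Rightarrow> (nat \<Rightarrow> nat) \<Rightarrow> bool" where
  "perm_word r is x \<longleftrightarrow> set is \<subseteq> {1..<r} \<and> foldr (\<lambda>i f. sref i \<circ> f) is id = x"

definition perm_len :: "nat \<Rightarrow> (nat \<Rightarrow> nat) \<Rightarrow> nat" where
  "perm_len r x = (LEAST k. \<exists>is. perm_word r is x \<and> length is = k)"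

definition reduced_word :: "nat \<Rightarrow> (nat \<Rightarrow> nat) \<Rightarrow> nat list" where
  "reduced_word r x = (SOME is. perm_word r is x \<and> length is = perm_len r x)"

definition hperm :: "nat \<Rightarrow> nat \<Rightarrow> zvec \<Rightarrow> (nat \<Rightarrow> nat) \<Rightarrow> zvec" where
  "hperm n r v x = fold (hgen n r) (reduced_word r x) v"

section \<open>The 0-Schur algebra S_0(n,r) as End_{H_r(0)}(V0^{\<otimes> r})\<close>

definition Lambda :: "nat \<Rightarrow> nat \<Rightarrow> nat list set" where
  "Lambda n r = {\<nu>. length \<nu> = n \<and> sum_list \<nu> = r}"

definition xi :: "nat list \<Rightarrow> zword" where
  "xi \<nu> = concat (map (\<lambda>i. replicate (\<nu> ! (i - 1)) i) [1..<length \<nu> + 1])"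

definition Rset :: "nat list \<Rightarrow> nat \<Rightarrow> nat set" where
  "Rset \<nu> i = {sum_list (take (i - 1) \<nu>)<..sum_list (take i \<nu>)}"

definition young :: "nat \<Rightarrow> nat \<Rightarrow> nat list \<Rightarrow> (nat \<Rightarrow> nat) set" where
  "young n r \<nu> = {p. p permutes {1..r} \<and> (\<forall>i\<in>{1..n}. p ` Rset \<nu> i = Rset \<nu> i)}"

definition rowsum :: "nat \<Rightarrow> (nat \<Rightarrow> nat \<Rightarrow> nat) \<Rightarrow> nat list" where
  "rowsum n A = map (\<lambda>i. \<Sum>j=1..n. A i j) [1..<n + 1]"

definition colsum :: "nat \<Rightarrow> (nat \<Rightarrow> nat \<Rightarrow> nat) \<Rightarrow> nat list" where
  "colsum n A = map (\<lambda>j. \<Sum>i=1..n. A i j) [1..<n + 1]"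

definition wA :: "nat \<Rightarrow> nat \<Rightarrow> (nat \<Rightarrow> nat \<Rightarrow> nat) \<Rightarrow> (nat \<Rightarrow> nat)" where
  "wA n r A = (SOME w. w permutes {1..r} \<and>
      (\<forall>i\<in>{1..n}. \<forall>j\<in>{1..n}.
         A i j = card (Rset (rowsum n A) i \<inter> w ` Rset (colsum n A) j)))"

definition dcoset :: "nat \<Rightarrow> nat \<Rightarrow> (nat \<Rightarrow> nat \<Rightarrow> nat) \<Rightarrow> (nat \<Rightarrow> nat) \<Rightarrow> (nat \<Rightarrow> nat) set" where
  "dcoset n r A w = {a \<circ> w \<circ> b | a b. a \<in> young n r (rowsum n A) \<and> b \<in> young n r (colsum n A)}"

definition dA :: "nat \<Rightarrow> nat \<Rightarrow> (nat \<Rightarrow> nat \<Rightarrow> nat) \<Rightarrow> (nat \<Rightarrow> nat)" where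
  "dA n r A = (ARG_MIN (perm_len r) x. x \<in> dcoset n r A (wA n r A))"

text \<open>e_A as H_r(0)-endomorphism of V0^{\<otimes> r} (transported along phi_0):
  xi_nu h \<mapsto> delta_{co(A),nu} xi_{ro(A)} (sum over the double coset of pi_x) h,
  tested on the basis elements h = pi_y of H_r(0).\<close>
definition schur_prop :: "nat \<Rightarrow> nat \<Rightarrow> (nat \<Rightarrow> nat \<Rightarrow> nat) \<Rightarrow> zop \<Rightarrow> bool" where
  "schur_prop n r A T \<longleftrightarrow>
     (\<forall>w u. w \<notin> zwords n r \<or> u \<notin> zwords n r \<longrightarrow> T w u = 0) \<and>
     (\<forall>\<nu>\<in>Lambda n r. \<forall>y. y permutes {1..r} \<longrightarrow>
        zlin n r T (hperm n r (zbvec (xi \<nu>)) y) =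
          (if colsum n A = \<nu>
           then (\<lambda>u. \<Sum>x\<in>dcoset n r A (dA n r A).
                        hperm n r (hperm n r (zbvec (xi (rowsum n A))) x) y u)
           else (\<lambda>_. 0)))"

definition eA :: "nat \<Rightarrow> nat \<Rightarrow> (nat \<Rightarrow> nat \<Rightarrow> nat) \<Rightarrow> zop" where
  "eA n r A = (THE T. schur_prop n r A T)"

definition diagm :: "nat list \<Rightarrow> nat \<Rightarrow> nat \<Rightarrow> nat" where
  "diagm \<nu> i j = (if i = j \<and> 1 \<le> i \<and> i \<le> length \<nu> then \<nu> ! (i - 1) else 0)"

definition unitm :: "nat \<Rightarrow> nat \<Rightarrow> nat \<Rightarrow> nat \<Rightarrow> nat" where
  "unitm a b i j = (if i = a \<and> j = b then 1 else 0)"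

definition k_mu :: "nat \<Rightarrow> nat \<Rightarrow> nat list \<Rightarrow> zop" where
  "k_mu n r \<mu> = eA n r (diagm \<mu>)"

definition schur_e :: "nat \<Rightarrow> nat \<Rightarrow> nat \<Rightarrow> zop" where
  "schur_e n r i = (\<lambda>w u. \<Sum>l\<in>{l\<in>Lambda n r. 1 \<le> l ! i}.
      eA n r (\<lambda>a b. diagm l a b - unitm (i + 1) (i + 1) a b + unitm i (i + 1) a b) w u)"

definition schur_f :: "nat \<Rightarrow> nat \<Rightarrow> nat \<Rightarrow> zop" where
  "schur_f n r i = (\<lambda>w u. \<Sum>l\<in>{l\<in>Lambda n r. 1 \<le> l ! (i - 1)}.
      eA n r (\<lambda>a b. diagm l a b - unitm i i a b + unitm (i + 1) i a b) w u)"

section \<open>The U_0(gl_n)-action on V0^{\<otimes> r} (the map psi_{n,r} on generators)\<close>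

text \<open>Operators on V0 = C^n, given by images of basis vectors xi_k (k \<in> {1..n}).\<close>
definition vunit :: "nat \<Rightarrow> nat \<Rightarrow> complex" where
  "vunit a = (\<lambda>m. if m = a then 1 else 0)"

definition matE :: "nat \<Rightarrow> nat \<Rightarrow> nat \<Rightarrow> nat \<Rightarrow> complex" where
  "matE a b = (\<lambda>k. if k = b then vunit a else (\<lambda>_. 0))"

definition matK :: "nat \<Rightarrow> nat \<Rightarrow> nat \<Rightarrow> complex" where
  "matK i = (\<lambda>k. if k = i then (\<lambda>_. 0) else vunit k)"

definition tensor_op :: "nat \<Rightarrow> nat \<Rightarrow> (nat \<Rightarrow> nat \<Rightarrow> nat \<Rightarrow> complex) \<Rightarrow> zop" where
  "tensor_op n r ops = (\<lambda>w u. if w \<in> zwords n r \<and> u \<in> zwords n r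
      then \<Prod>p<r. ops p (w ! p) (u ! p) else 0)"

text \<open>Iterated coproducts:
  Delta^{(r)}(e_i) = sum_j 1 \<otimes>..\<otimes> 1 \<otimes> e_i \<otimes> k_i \<otimes>..\<otimes> k_i,
  Delta^{(r)}(f_i) = sum_j k_{i+1} \<otimes>..\<otimes> k_{i+1} \<otimes> f_i \<otimes> 1 \<otimes>..\<otimes> 1,
  Delta^{(r)}(k_i) = k_i \<otimes>..\<otimes> k_i.\<close>
definition psi_e :: "nat \<Rightarrow> nat \<Rightarrow> nat \<Rightarrow> zop" where
  "psi_e n r i = (\<lambda>w u. \<Sum>j<r. tensor_op n r
      (\<lambda>p. if p < j then vunit else if p = j then matE i (i + 1) else matK i) w u)"

definition psi_f :: "nat \<Rightarrow> nat \<Rightarrow> nat \<Rightarrow> zop" where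
  "psi_f n r i = (\<lambda>w u. \<Sum>j<r. tensor_op n r
      (\<lambda>p. if p < j then matK (i + 1) else if p = j then matE (i + 1) i else vunit) w u)"

definition psi_k :: "nat \<Rightarrow> nat \<Rightarrow> nat \<Rightarrow> zop" where
  "psi_k n r i = tensor_op n r (\<lambda>p. matK i)"

end

theory Submission
  imports Defs
begin

(*
  All operators involved commute with the right action of H_r(0), and such an operator is
  determined by its values on the tensors xi_lambda: every basis tensor is xi_lambda pi_y for
  its content lambda and the unique y rearranging xi_lambda into it whose length is the number
  of inversions of the tensor (bubble sort). For the coproduct operators psi(e_i), psi(f_i), psi(k_i) equivariance is checked
  on two adjacent tensor factors at a time, since pi_j only touches the factors j and j + 1.
  On the Schur side, the sum of xi_ro(A) pi_x over the double coset of d_A is the sum of the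
  tensors whose letters, paired with those of xi_co(A), show each pair (i, j) exactly a_ij times.
  For A = D_lambda - E_(i+1,i+1) + E_(i,i+1) these are the tensors obtained from xi_lambda by
  lowering one letter i + 1 to i, i.e. psi(e_i) xi_lambda. Hence e_A is psi(e_i) on the weight
  space of lambda, and summing over lambda gives e_i = psi(e_i); f_i is symmetric, and for a
  diagonal A = diag(mu) the only such tensor is xi_mu itself, which gives the k_mu.
*)

declare upt_Suc[simp del]

section \<open>Inversions of words and lengths of permutations\<close>

definition swap_adj :: "nat \<Rightarrow> 'a list \<Rightarrow> 'a list" where
  "swap_adj a w = w[a := w ! Suc a, Suc a := w ! a]"

definition inversions :: "nat list \<Rightarrow> (nat \<times> nat) set" where
  "inversions w = {(p, q). p < q \<and> q < length w \<and> w ! q < w ! p}"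

definition inv_number :: "nat list \<Rightarrow> nat" where
  "inv_number w = card (inversions w)"

text \<open>Permutations act on \<open>{1..r}\<close>, list positions start at \<open>0\<close>. \<open>permute_word r v x\<close> is the word
  \<open>v \<cdot> x\<close> whose \<open>m\<close>-th letter is the \<open>x(m)\<close>-th letter of \<open>v\<close>.\<close>

definition perm_list :: "nat \<Rightarrow> (nat \<Rightarrow> nat) \<Rightarrow> nat list" where
  "perm_list r p = map p [1..<Suc r]"

definition perm_inv_number :: "nat \<Rightarrow> (nat \<Rightarrow> nat) \<Rightarrow> nat" where
  "perm_inv_number r p = inv_number (perm_list r p)"

definition permute_word :: "nat \<Rightarrow> nat list \<Rightarrow> (nat \<Rightarrow> nat) \<Rightarrow> nat list" where
  "permute_word r v x = map (\<lambda>m. v ! (x m - 1)) [1..<Suc r]"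

definition sref_prod :: "nat list \<Rightarrow> nat \<Rightarrow> nat" where
  "sref_prod is = foldr (\<lambda>i f. sref i \<circ> f) is id"

lemma finite_inversions [simp]: "finite (inversions w)"
  by (rule finite_subset[of _ "{..<length w} \<times> {..<length w}"]) (auto simp: inversions_def)

lemma length_swap_adj [simp]: "length (swap_adj a w) = length w"
  by (simp add: swap_adj_def)

lemma nth_swap_adj:
  "Suc a < length w \<Longrightarrow> p < length w \<Longrightarrow> swap_adj a w ! p = w ! transpose a (Suc a) p"
  by (auto simp: swap_adj_def nth_list_update transpose_def)

lemma swap_adj_nth_simps:
  assumes "Suc a < length w"
  shows "swap_adj a w ! a = w ! Suc a" "swap_adj a w ! Suc a = w ! a"
    "p \<noteq> a \<Longrightarrow> p \<noteq> Suc a \<Longrightarrow> swap_adj a w ! p = w ! p"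
  using assms by (simp_all add: swap_adj_def nth_list_update)

lemma swap_adj_swap_adj [simp]: "Suc a < length w \<Longrightarrow> swap_adj a (swap_adj a w) = w"
  by (rule nth_equalityI) (auto simp: nth_swap_adj transpose_def)

lemma mset_swap_adj [simp]: "Suc a < length w \<Longrightarrow> mset (swap_adj a w) = mset w"
  by (simp add: swap_adj_def mset_swap)

lemma swap_adj_eq_self: "Suc a < length w \<Longrightarrow> w ! a = w ! Suc a \<Longrightarrow> swap_adj a w = w"
  by (rule nth_equalityI) (auto simp: nth_swap_adj transpose_def)

lemma inversions_swap_adj:
  assumes a: "Suc a < length w"
  shows "inversions (swap_adj a w) - {(a, Suc a)} =
    map_prod (transpose a (Suc a)) (transpose a (Suc a)) ` (inversions w - {(a, Suc a)})"
proof -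
  let ?t = "transpose a (Suc a)"
  have mono: "p < q \<Longrightarrow> (p, q) \<noteq> (a, Suc a) \<Longrightarrow> ?t p < ?t q" for p q
    by (auto simp: transpose_def)
  have lt: "x < length w \<Longrightarrow> ?t x < length w" for x
    using a by (auto simp: transpose_def)
  have "(p, q) \<in> inversions (swap_adj a w) - {(a, Suc a)} \<longleftrightarrow>
        (?t p, ?t q) \<in> inversions w - {(a, Suc a)}" for p q
    using a mono[of p q] mono[of "?t p" "?t q"] lt[of p] lt[of q] nth_swap_adj[OF a]
    by (auto simp: inversions_def) (auto simp: transpose_def split: if_splits)
  moreover have "map_prod ?t ?t (map_prod ?t ?t pq) = pq" for pq
    by (cases pq) simp
  hence "pq \<in> map_prod ?t ?t ` X \<longleftrightarrow> map_prod ?t ?t pq \<in> X" for pq :: "nat \<times> nat" and X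
    by (metis (no_types, lifting) image_iff)
  ultimately show ?thesis
    by (auto simp: set_eq_iff)
qed

lemma inv_number_swap_adj:
  assumes a: "Suc a < length w"
  shows "inv_number (swap_adj a w) + (if w ! Suc a < w ! a then 1 else 0) =
         inv_number w + (if w ! a < w ! Suc a then 1 else 0)"
proof -
  let ?t = "transpose a (Suc a)"
  have "inj (map_prod ?t ?t)"
    using map_prod_inj_on[of ?t UNIV ?t UNIV] by simp
  hence c: "card (inversions (swap_adj a w) - {(a, Suc a)}) = card (inversions w - {(a, Suc a)})"
    unfolding inversions_swap_adj[OF a] by (simp add: card_image inj_on_subset)
  have m1: "(a, Suc a) \<in> inversions (swap_adj a w) \<longleftrightarrow> w ! a < w ! Suc a"
    using a by (auto simp: inversions_def nth_swap_adj)
  have m2: "(a, Suc a) \<in> inversions w \<longleftrightarrow> w ! Suc a < w ! a"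
    using a by (auto simp: inversions_def)
  consider "w ! a < w ! Suc a" | "w ! Suc a < w ! a" | "w ! a = w ! Suc a"
    by linarith
  thus ?thesis
  proof cases
    case 1
    thus ?thesis using c m1 m2 card_Suc_Diff1[OF finite_inversions[of "swap_adj a w"]]
      by (simp add: inv_number_def)
  next
    case 2
    thus ?thesis using c m1 m2 card_Suc_Diff1[OF finite_inversions[of w]]
      by (simp add: inv_number_def)
  next
    case 3
    thus ?thesis using swap_adj_eq_self[OF a] by simp
  qed
qed

lemma inv_number_eq_0_iff_sorted: "inv_number w = 0 \<longleftrightarrow> sorted w"
proof -
  have "inversions w = {} \<longleftrightarrow> sorted w"
    by (auto simp: inversions_def sorted_iff_nth_mono_less not_less[symmetric])
  thus ?thesis by (simp add: inv_number_def)
qed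

lemma descent_if_inv_number_pos:
  assumes "inv_number w \<noteq> 0"
  obtains a where "Suc a < length w" "w ! Suc a < w ! a"
  using assms unfolding inv_number_eq_0_iff_sorted sorted_iff_nth_Suc by (auto simp: not_le)

lemma sref_eq_transpose: "sref i = transpose i (Suc i)"
  by (rule ext) (auto simp: sref_def transpose_def)

lemma sref_permutes: "1 \<le> i \<Longrightarrow> i < r \<Longrightarrow> sref i permutes {1..r}"
  unfolding sref_eq_transpose by (rule permutes_swap_id) auto

lemma sref_sref [simp]: "sref i (sref i x) = x"
  by (auto simp: sref_def)

lemma map_comp_sref:
  assumes "1 \<le> j" "j < r"
  shows "map (f \<circ> sref j) [1..<Suc r] = swap_adj (j - 1) (map f [1..<Suc r])"
proof (rule nth_equalityI)
  fix k assume "k < length (map (f \<circ> sref j) [1..<Suc r])"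
  hence k: "k < r" by simp
  have "swap_adj (j - 1) (map f [1..<Suc r]) ! k = map f [1..<Suc r] ! transpose (j - 1) j k"
    using assms k nth_swap_adj[of "j - 1" "map f [1..<Suc r]" k] by simp
  also have "\<dots> = f (Suc (transpose (j - 1) j k))"
    using assms k by (subst nth_map) (auto simp: transpose_def)
  finally show "map (f \<circ> sref j) [1..<Suc r] ! k = swap_adj (j - 1) (map f [1..<Suc r]) ! k"
    using assms k by (auto simp: transpose_def sref_def)
qed simp

lemma perm_inv_number_comp_sref:
  assumes "1 \<le> j" "j < r"
  shows "perm_inv_number r (p \<circ> sref j) + (if p (Suc j) < p j then 1 else 0) =
         perm_inv_number r p + (if p j < p (Suc j) then 1 else 0)"
proof -
  have "perm_list r (p \<circ> sref j) = swap_adj (j - 1) (perm_list r p)"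
    unfolding perm_list_def by (rule map_comp_sref[OF assms])
  moreover have "perm_list r p ! (j - 1) = p j" "perm_list r p ! Suc (j - 1) = p (Suc j)"
    "Suc (j - 1) < length (perm_list r p)"
    using assms by (auto simp: perm_list_def nth_append)
  ultimately show ?thesis
    unfolding perm_inv_number_def using inv_number_swap_adj[of "j - 1" "perm_list r p"] by simp
qed

lemma permute_word_comp_sref:
  assumes "1 \<le> j" "j < r"
  shows "permute_word r v (x \<circ> sref j) = swap_adj (j - 1) (permute_word r v x)"
  using map_comp_sref[OF assms, of "\<lambda>m. v ! (x m - 1)"] by (simp add: permute_word_def o_def)

lemma nth_permute_word: "k < r \<Longrightarrow> permute_word r v x ! k = v ! (x (Suc k) - 1)"
  by (simp add: permute_word_def nth_upt)

lemma length_permute_word [simp]: "length (permute_word r v x) = r"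
  by (simp add: permute_word_def)

lemma permute_word_id: "length v = r \<Longrightarrow> permute_word r v id = v"
  by (intro nth_equalityI) (auto simp: permute_word_def nth_upt)

lemma sref_prod_Nil [simp]: "sref_prod [] = id"
  by (simp add: sref_prod_def)

lemma sref_prod_snoc: "sref_prod (js @ [j]) = sref_prod js \<circ> sref j"
  by (induction js) (auto simp: sref_prod_def o_assoc)

lemma sref_prod_permutes: "set is \<subseteq> {1..<r} \<Longrightarrow> sref_prod is permutes {1..r}"
proof (induction "is" rule: rev_induct)
  case Nil thus ?case by (metis sref_prod_Nil permutes_id)
next
  case (snoc j js)
  hence "sref_prod js permutes {1..r}" "sref j permutes {1..r}"
    using sref_permutes by auto
  thus ?case by (metis sref_prod_snoc permutes_compose)
qed

lemma perm_inv_number_id: "perm_inv_number r id = 0"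
  by (simp add: perm_inv_number_def perm_list_def inv_number_eq_0_iff_sorted)

lemma perm_inv_number_sref_prod_le:
  "set is \<subseteq> {1..<r} \<Longrightarrow> perm_inv_number r (sref_prod is) \<le> length is"
proof (induction "is" rule: rev_induct)
  case Nil thus ?case by (metis sref_prod_Nil perm_inv_number_id le0)
next
  case (snoc j js)
  hence IH: "perm_inv_number r (sref_prod js) \<le> length js" and j: "1 \<le> j" "j < r"
    by auto
  have "perm_inv_number r (sref_prod js \<circ> sref j) \<le> Suc (perm_inv_number r (sref_prod js))"
    using perm_inv_number_comp_sref[OF j, of "sref_prod js"] by (simp split: if_splits)
  thus ?case using IH by (simp add: sref_prod_snoc comp_def)
qed

lemma perm_inv_number_eq_0_iff:
  assumes "p permutes {1..r}"
  shows "perm_inv_number r p = 0 \<longleftrightarrow> p = id"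
proof
  assume "perm_inv_number r p = 0"
  hence "sorted (perm_list r p)"
    by (simp add: perm_inv_number_def inv_number_eq_0_iff_sorted)
  moreover have "distinct (perm_list r p)" "set (perm_list r p) = {1..r}"
    using permutes_inj_on[OF assms] permutes_image[OF assms]
    by (auto simp: perm_list_def distinct_map atLeastLessThanSuc_atLeastAtMost)
  ultimately have "perm_list r p = [1..<Suc r]"
    by (metis atLeastLessThanSuc_atLeastAtMost sorted_distinct_set_unique sorted_upt
        distinct_upt set_upt)
  hence "p k = k" if "k \<in> {1..r}" for k
    using that nth_map[of "k - 1" "[1..<Suc r]" p] by (auto simp: perm_list_def nth_upt)
  thus "p = id"
    using permutes_not_in[OF assms] by (metis eq_id_iff)
qed (simp add: perm_inv_number_id)

text \<open>Bubble sort: a descent of \<open>p\<close> at \<open>j\<close> is removed by \<open>p \<circ> sref j\<close>, which lowers the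
  inversion number by one.\<close>

lemma sref_prod_of_length_perm_inv_number:
  "p permutes {1..r} \<Longrightarrow>
   \<exists>is. set is \<subseteq> {1..<r} \<and> sref_prod is = p \<and> length is = perm_inv_number r p"
proof (induction "perm_inv_number r p" arbitrary: p)
  case 0
  hence "p = id" using perm_inv_number_eq_0_iff by metis
  thus ?case using "0"(1) by (intro exI[of _ "[]"]) simp
next
  case (Suc m)
  obtain a where a: "Suc a < length (perm_list r p)" "perm_list r p ! Suc a < perm_list r p ! a"
    using descent_if_inv_number_pos[of "perm_list r p"] Suc(2)
    by (metis perm_inv_number_def nat.distinct(1))
  define j where "j = Suc a"
  have j: "1 \<le> j" "j < r" using a(1) by (auto simp: j_def perm_list_def)
  have "p (Suc j) < p j" using a j by (simp add: perm_list_def nth_append j_def)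
  hence "perm_inv_number r (p \<circ> sref j) = m"
    using perm_inv_number_comp_sref[OF j, of p] Suc(2) by simp
  moreover have "p \<circ> sref j permutes {1..r}"
    using Suc(3) sref_permutes[OF j] permutes_compose by blast
  ultimately obtain is' where "set is' \<subseteq> {1..<r}" "sref_prod is' = p \<circ> sref j" "length is' = m"
    using Suc(1) by metis
  thus ?case using j Suc(2)
    by (intro exI[of _ "is' @ [j]"]) (auto simp: sref_prod_snoc o_assoc[symmetric])
qed

lemma perm_word_iff: "perm_word r is x \<longleftrightarrow> set is \<subseteq> {1..<r} \<and> sref_prod is = x"
  by (simp add: perm_word_def sref_prod_def)

lemma perm_len_eq_perm_inv_number:
  assumes "p permutes {1..r}"
  shows "perm_len r p = perm_inv_number r p"
  unfolding perm_len_def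
proof (rule Least_equality)
  show "\<exists>is. perm_word r is p \<and> length is = perm_inv_number r p"
    using sref_prod_of_length_perm_inv_number[OF assms] by (auto simp: perm_word_iff)
qed (use perm_inv_number_sref_prod_le in \<open>auto simp: perm_word_iff\<close>)

lemma reduced_word:
  assumes "p permutes {1..r}"
  shows "set (reduced_word r p) \<subseteq> {1..<r}" "sref_prod (reduced_word r p) = p"
    "length (reduced_word r p) = perm_inv_number r p"
proof -
  have "\<exists>is. perm_word r is p \<and> length is = perm_len r p"
    using sref_prod_of_length_perm_inv_number[OF assms] perm_len_eq_perm_inv_number[OF assms]
    by (auto simp: perm_word_iff)
  hence "perm_word r (reduced_word r p) p \<and> length (reduced_word r p) = perm_len r p"
    unfolding reduced_word_def by (rule someI_ex)
  thus "set (reduced_word r p) \<subseteq> {1..<r}" "sref_prod (reduced_word r p) = p"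
    "length (reduced_word r p) = perm_inv_number r p"
    using perm_len_eq_perm_inv_number[OF assms] by (auto simp: perm_word_iff)
qed

section \<open>The 0-Hecke action on basis tensors\<close>

lemma finite_zwords [simp]: "finite (zwords n r)"
  using finite_lists_length_eq[of "{1..n}" r] by (simp add: zwords_def conj_commute)

lemma zwordsD:
  assumes "w \<in> zwords n r"
  shows "length w = r" "k < r \<Longrightarrow> w ! k \<in> {1..n}"
  using assms by (auto simp: zwords_def dest!: nth_mem)

lemma swap_adj_zwords: "w \<in> zwords n r \<Longrightarrow> Suc a < r \<Longrightarrow> swap_adj a w \<in> zwords n r"
  unfolding zwords_def swap_adj_def by (simp add: set_swap)

lemma zlin_zbvec: "w \<in> zwords n r \<Longrightarrow> zlin n r T (zbvec w) = T w"
  unfolding zlin_def zbvec_def by (simp add: if_distrib[of "\<lambda>c. c * _"] cong: if_cong)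

lemma zlin_sum: "zlin n r T (\<lambda>u. \<Sum>x\<in>X. f x u) = (\<lambda>u. \<Sum>x\<in>X. zlin n r T (f x) u)"
  by (rule ext) (simp add: zlin_def sum_distrib_right sum.swap[of _ X])

lemma zlin_zero: "zlin n r T (\<lambda>_. 0) = (\<lambda>_. 0)"
  by (simp add: zlin_def)

lemma zlin_neg: "zlin n r T (\<lambda>u. - f u) = (\<lambda>u. - zlin n r T f u)"
  by (rule ext) (simp add: zlin_def sum_negf)

lemma hgen_zbvec:
  assumes "w \<in> zwords n r" "1 \<le> i"
  shows "hgen n r i (zbvec w) =
    (if w ! (i - 1) < w ! i then zbvec (swap_adj (i - 1) w)
     else if w ! (i - 1) = w ! i then (\<lambda>_. 0) else (\<lambda>u. - zbvec w u))"
  using assms by (simp add: hgen_def zlin_zbvec hgen_basis_def swap_adj_def)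

lemma hgen_zero: "hgen n r i (\<lambda>_. 0) = (\<lambda>_. 0)"
  by (simp add: hgen_def zlin_zero)

lemma fold_hgen_sum:
  "fold (hgen n r) is (\<lambda>u. \<Sum>x\<in>X. f x u) = (\<lambda>u. \<Sum>x\<in>X. fold (hgen n r) is (f x) u)"
  by (induction "is" arbitrary: f) (simp_all add: hgen_def zlin_sum)

lemma hperm_sum: "hperm n r (\<lambda>u. \<Sum>x\<in>X. f x u) y = (\<lambda>u. \<Sum>x\<in>X. hperm n r (f x) y u)"
  unfolding hperm_def by (rule fold_hgen_sum)

lemma hperm_zero: "hperm n r (\<lambda>_. 0) y = (\<lambda>_. 0)"
  using hperm_sum[of n r "\<lambda>x u. 0" "{}" y] by simp

lemma permute_word_zwords:
  assumes "v \<in> zwords n r" "x permutes {1..r}"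
  shows "permute_word r v x \<in> zwords n r"
proof -
  have "v ! (x m - 1) \<in> {1..n}" if "m \<in> {1..r}" for m
  proof -
    have "x m \<in> {1..r}" using permutes_in_image[OF assms(2)] that by simp
    thus ?thesis using zwordsD(2)[OF assms(1)] by auto
  qed
  thus ?thesis by (auto simp: zwords_def permute_word_def atLeastLessThanSuc_atLeastAtMost)
qed

lemma sorted_nth_pred_less:
  assumes "sorted v" "length v = r" "i \<in> {1..r}" "k \<in> {1..r}" "v ! (i - 1) < v ! (k - 1)"
  shows "i < k"
  using sorted_nth_mono[OF assms(1), of "k - 1" "i - 1"] assms(2-5) by fastforce

text \<open>The word \<open>v \<cdot> x\<close> has an inversion only where \<open>x\<close> has one, since \<open>v\<close> is sorted.\<close>

lemma inv_number_permute_word_le: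
  assumes "sorted v" "length v = r" "x permutes {1..r}"
  shows "inv_number (permute_word r v x) \<le> perm_inv_number r x"
proof -
  have "inversions (permute_word r v x) \<subseteq> inversions (perm_list r x)"
  proof
    fix pq assume "pq \<in> inversions (permute_word r v x)"
    then obtain p q where pq: "pq = (p, q)" "p < q" "q < r"
      "v ! (x (Suc q) - 1) < v ! (x (Suc p) - 1)"
      by (auto simp: inversions_def nth_permute_word)
    moreover have "x (Suc q) \<in> {1..r}" "x (Suc p) \<in> {1..r}"
      using pq permutes_in_image[OF assms(3)] by auto
    ultimately have "x (Suc q) < x (Suc p)"
      using sorted_nth_pred_less[OF assms(1,2)] by blast
    thus "pq \<in> inversions (perm_list r x)"
      using pq by (simp add: inversions_def perm_list_def nth_upt)
  qed
  thus ?thesis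
    unfolding perm_inv_number_def inv_number_def by (rule card_mono[OF finite_inversions])
qed

text \<open>If \<open>p j < p (j + 1)\<close>, the letters of \<open>v \<cdot> p\<close> at positions \<open>j, j + 1\<close> are in order, so \<open>\<pi>\<^sub>j\<close>
  either swaps them, creating one inversion, or kills the tensor because they are equal.\<close>

lemma hgen_zbvec_permute_word:
  assumes v: "sorted v" "v \<in> zwords n r" and p: "p permutes {1..r}"
    and j: "1 \<le> j" "j < r" and inc: "p j < p (Suc j)"
  shows "hgen n r j (zbvec (permute_word r v p)) =
    (if inv_number (permute_word r v (p \<circ> sref j)) = Suc (inv_number (permute_word r v p))
     then zbvec (permute_word r v (p \<circ> sref j)) else (\<lambda>_. 0))"
proof -
  let ?W = "permute_word r v p"
  have sj: "Suc (j - 1) < length ?W" and jj: "Suc (j - 1) = j" using j by auto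
  have "p j \<in> {1..r}" "p (Suc j) \<in> {1..r}" using permutes_in_image[OF p] j by auto
  hence "?W ! (j - 1) \<le> ?W ! j"
    using j sorted_nth_mono[OF v(1), of "p j - 1" "p (Suc j) - 1"] inc zwordsD(1)[OF v(2)]
    by (simp add: nth_permute_word)
  thus ?thesis
    using hgen_zbvec[OF permute_word_zwords[OF v(2) p] j(1)] inv_number_swap_adj[OF sj]
      swap_adj_eq_self[OF sj] permute_word_comp_sref[OF j, of v p]
    unfolding jj by auto
qed

text \<open>Along a reduced word the tensor survives exactly when every step creates an inversion.\<close>

lemma fold_hgen_sorted:
  assumes v: "sorted v" "v \<in> zwords n r"
  shows "set is \<subseteq> {1..<r} \<Longrightarrow> perm_inv_number r (sref_prod is) = length is \<Longrightarrow>
    fold (hgen n r) is (zbvec v) =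
      (if inv_number (permute_word r v (sref_prod is)) = length is
       then zbvec (permute_word r v (sref_prod is)) else (\<lambda>_. 0))"
proof (induction "is" rule: rev_induct)
  case Nil
  have "length v = r" using zwordsD(1)[OF v(2)] .
  thus ?case using v(1) permute_word_id[of v r]
    by (simp add: inv_number_eq_0_iff_sorted id_def)
next
  case (snoc j js)
  have j: "1 \<le> j" "j < r" and sjs: "set js \<subseteq> {1..<r}" using snoc.prems(1) by auto
  let ?p = "sref_prod js"
  let ?W = "permute_word r v ?p"
  have pp: "?p permutes {1..r}" using sref_prod_permutes[OF sjs] .
  have "perm_inv_number r (?p \<circ> sref j) = Suc (length js)"
    using snoc.prems(2) by (simp add: sref_prod_snoc comp_def)
  hence inc: "?p j < ?p (Suc j)" and eqp: "perm_inv_number r ?p = length js"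
    using perm_inv_number_comp_sref[OF j, of ?p] perm_inv_number_sref_prod_le[OF sjs]
    by (auto split: if_splits)
  have "inv_number ?W \<le> length js"
    using inv_number_permute_word_le[OF v(1) zwordsD(1)[OF v(2)] pp] eqp by simp
  moreover have "inv_number (permute_word r v (?p \<circ> sref j)) \<le> Suc (inv_number ?W)"
    using inv_number_swap_adj[of "j - 1" ?W] j by (simp add: permute_word_comp_sref split: if_splits)
  ultimately show ?case
    using snoc.IH[OF sjs eqp] hgen_zbvec_permute_word[OF v pp j inc] hgen_zero
    by (auto simp: sref_prod_snoc comp_def)
qed

lemma hperm_sorted:
  assumes "sorted v" "v \<in> zwords n r" "x permutes {1..r}"
  shows "hperm n r (zbvec v) x =
    (if inv_number (permute_word r v x) = perm_inv_number r x
     then zbvec (permute_word r v x) else (\<lambda>_. 0))"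
  using fold_hgen_sorted[OF assms(1,2) reduced_word(1)[OF assms(3)]] reduced_word[OF assms(3)]
  by (simp add: hperm_def)

lemma distinguished_perm_exists:
  assumes v: "sorted v" "length v = r"
  shows "length W = r \<Longrightarrow> mset W = mset v \<Longrightarrow>
    \<exists>y. y permutes {1..r} \<and> permute_word r v y = W \<and> inv_number W = perm_inv_number r y"
proof (induction "inv_number W" arbitrary: W)
  case 0
  hence "W = v"
    using v(1) by (metis inv_number_eq_0_iff_sorted properties_for_sort)
  thus ?case using v 0(1) permute_word_id[of v r] perm_inv_number_id[of r] permutes_id[of "{1..r}"]
    by (intro exI[of _ id]) (simp add: id_def)
next
  case (Suc m)
  obtain a where a: "Suc a < length W" "W ! Suc a < W ! a"
    using descent_if_inv_number_pos[of W] Suc(2) by (metis nat.distinct(1))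
  let ?W' = "swap_adj a W"
  have m: "inv_number ?W' = m" using inv_number_swap_adj[OF a(1)] a(2) Suc(2) by simp
  obtain y' where y': "y' permutes {1..r}" "permute_word r v y' = ?W'"
    "inv_number ?W' = perm_inv_number r y'"
    using Suc(1)[OF m[symmetric]] Suc(3,4) a(1) by auto
  define j where "j = Suc a"
  have j: "1 \<le> j" "j < r" using a(1) Suc(3) by (auto simp: j_def)
  have "permute_word r v y' ! a < permute_word r v y' ! Suc a"
    using y'(2) a by (simp add: swap_adj_nth_simps)
  moreover have "y' j \<in> {1..r}" "y' (Suc j) \<in> {1..r}"
    using permutes_in_image[OF y'(1)] j by auto
  ultimately have "y' j < y' (Suc j)"
    using sorted_nth_pred_less[OF v] j by (simp add: nth_permute_word j_def)
  hence "perm_inv_number r (y' \<circ> sref j) = Suc (perm_inv_number r y')"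
    using perm_inv_number_comp_sref[OF j, of y'] by simp
  moreover have "permute_word r v (y' \<circ> sref j) = W"
    using permute_word_comp_sref[OF j, of v y'] y'(2) a(1) by (simp add: j_def)
  ultimately show ?case
    using y' m Suc(2) permutes_compose[OF sref_permutes[OF j] y'(1)]
    by (intro exI[of _ "y' \<circ> sref j"]) simp
qed

lemma distinguished_perm_unique:
  assumes v: "sorted v" "length v = r"
  shows "y permutes {1..r} \<Longrightarrow> y' permutes {1..r} \<Longrightarrow> permute_word r v y = permute_word r v y' \<Longrightarrow>
    inv_number (permute_word r v y) = perm_inv_number r y \<Longrightarrow>
    inv_number (permute_word r v y') = perm_inv_number r y' \<Longrightarrow> y = y'"
proof (induction "inv_number (permute_word r v y)" arbitrary: y y')
  case 0
  thus ?case using perm_inv_number_eq_0_iff by metis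
next
  case (Suc m)
  let ?W = "permute_word r v y"
  obtain a where a: "Suc a < length ?W" "?W ! Suc a < ?W ! a"
    using descent_if_inv_number_pos[of ?W] Suc(2) by (metis nat.distinct(1))
  define j where "j = Suc a"
  have j: "1 \<le> j" "j < r" using a(1) by (auto simp: j_def)
  \<comment> \<open>both \<open>y\<close> and \<open>y'\<close> have a descent at \<open>j\<close>; removing it gives a shorter pair\<close>
  have step: "inv_number (permute_word r v (z \<circ> sref j)) = m \<and> perm_inv_number r (z \<circ> sref j) = m \<and>
      z \<circ> sref j permutes {1..r} \<and> permute_word r v (z \<circ> sref j) = swap_adj a ?W"
    if z: "z permutes {1..r}" "permute_word r v z = ?W" "inv_number ?W = perm_inv_number r z" for z
  proof -
    have "z j \<in> {1..r}" "z (Suc j) \<in> {1..r}" using permutes_in_image[OF z(1)] j by auto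
    moreover have "v ! (z (Suc j) - 1) < v ! (z j - 1)"
      using a(2)[folded z(2)] j by (simp add: nth_permute_word j_def)
    ultimately have "z (Suc j) < z j"
      using sorted_nth_pred_less[OF v] by blast
    hence "Suc (perm_inv_number r (z \<circ> sref j)) = perm_inv_number r z"
      using perm_inv_number_comp_sref[OF j, of z] by simp
    moreover have "permute_word r v (z \<circ> sref j) = swap_adj a ?W"
      using permute_word_comp_sref[OF j, of v z] z(2) by (simp add: j_def)
    moreover have "Suc (inv_number (swap_adj a ?W)) = inv_number ?W"
      using inv_number_swap_adj[OF a(1)] a(2) by simp
    ultimately show ?thesis
      using z Suc(2) permutes_compose[OF sref_permutes[OF j] z(1)] by simp
  qed
  have "y \<circ> sref j = y' \<circ> sref j"
    using Suc(1) step[OF Suc(3) refl Suc(6)] step[OF Suc(4) Suc(5)[symmetric]] Suc(5,7) by metis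
  thus ?case by (metis comp_apply ext sref_sref)
qed

section \<open>The tensors \<open>\<xi>\<^sub>\<lambda>\<close> and the content of a word\<close>

fun xi_from :: "nat \<Rightarrow> nat list \<Rightarrow> nat list" where
  "xi_from b [] = []"
| "xi_from b (x # xs) = replicate x b @ xi_from (Suc b) xs"

lemma concat_replicate_eq_xi_from:
  "concat (map (\<lambda>i. replicate (\<nu> ! (i - b)) i) [b..<b + length \<nu>]) = xi_from b \<nu>"
proof (induction \<nu> arbitrary: b)
  case (Cons x xs)
  have "map (\<lambda>i. replicate ((x # xs) ! (i - b)) i) [Suc b..<Suc (b + length xs)] =
        map (\<lambda>i. replicate (xs ! (i - Suc b)) i) [Suc b..<Suc (b + length xs)]"
    by (rule map_cong) (auto simp: Suc_diff_Suc)
  moreover have "[b..<b + length (x # xs)] = b # [Suc b..<Suc (b + length xs)]"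
    by (simp add: upt_conv_Cons)
  ultimately show ?case
    using Cons.IH[of "Suc b"] by (simp only: list.map concat.simps) simp
qed simp

lemma xi_eq_xi_from: "xi \<nu> = xi_from 1 \<nu>"
  unfolding xi_def using concat_replicate_eq_xi_from[of \<nu> 1] by (simp add: add.commute)

lemma length_xi_from [simp]: "length (xi_from b \<nu>) = sum_list \<nu>"
  by (induction \<nu> arbitrary: b) auto

lemma set_xi_from: "set (xi_from b \<nu>) \<subseteq> {b..<b + length \<nu>}"
  by (induction \<nu> arbitrary: b) (auto, fastforce+)

lemma sorted_xi_from: "sorted (xi_from b \<nu>)"
proof (induction \<nu> arbitrary: b)
  case (Cons x xs)
  have "\<forall>y\<in>set (xi_from (Suc b) xs). b \<le> y" using set_xi_from[of "Suc b" xs] by auto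
  thus ?case using Cons.IH[of "Suc b"] by (auto simp: sorted_append)
qed simp

lemma count_list_xi_from:
  "count_list (xi_from b \<nu>) c = (if b \<le> c \<and> c < b + length \<nu> then \<nu> ! (c - b) else 0)"
proof (induction \<nu> arbitrary: b)
  case (Cons x xs)
  have "count_list (replicate x b) c = (if c = b then x else 0)"
    by (induction x) auto
  thus ?case using Cons.IH[of "Suc b"]
    by (cases "c = b") (auto simp: nth_Cons' count_list_append)
qed simp

lemma nth_xi_from_eq_iff:
  "m < sum_list \<nu> \<Longrightarrow> c < length \<nu> \<Longrightarrow>
   xi_from b \<nu> ! m = b + c \<longleftrightarrow> sum_list (take c \<nu>) \<le> m \<and> m < sum_list (take (Suc c) \<nu>)"
proof (induction \<nu> arbitrary: b m c)
  case (Cons x xs)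
  show ?case
  proof (cases "m < x")
    case True
    thus ?thesis by (cases c) (auto simp: nth_append)
  next
    case False
    hence e: "xi_from b (x # xs) ! m = xi_from (Suc b) xs ! (m - x)" by (simp add: nth_append)
    have m': "m - x < sum_list xs" using Cons.prems(1) False by simp
    show ?thesis
    proof (cases c)
      case 0
      have "xi_from (Suc b) xs ! (m - x) \<in> set (xi_from (Suc b) xs)" using m' by simp
      hence "xi_from (Suc b) xs ! (m - x) \<ge> Suc b" using set_xi_from[of "Suc b" xs] by auto
      thus ?thesis using e 0 False by auto
    next
      case (Suc c')
      thus ?thesis using e False Cons.IH[OF m', of c' "Suc b"] Cons.prems(2) by auto
    qed
  qed
qed simp

lemma
  assumes "\<nu> \<in> Lambda n r"
  shows xi_zwords: "xi \<nu> \<in> zwords n r"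
    and sorted_xi: "sorted (xi \<nu>)"
    and length_xi: "length (xi \<nu>) = r"
  using assms set_xi_from[of 1 \<nu>]
  by (auto simp: Lambda_def zwords_def xi_eq_xi_from sorted_xi_from)

lemma count_list_xi:
  "\<nu> \<in> Lambda n r \<Longrightarrow> count_list (xi \<nu>) c = (if c \<in> {1..n} then \<nu> ! (c - 1) else 0)"
  by (auto simp: xi_eq_xi_from count_list_xi_from Lambda_def)

lemma mem_Rset_iff:
  assumes "\<nu> \<in> Lambda n r" "m \<in> {1..r}"
  shows "m \<in> Rset \<nu> c \<longleftrightarrow> c \<in> {1..n} \<and> xi \<nu> ! (m - 1) = c"
proof (cases "c \<in> {1..n}")
  case True
  have "m - 1 < sum_list \<nu>" "c - 1 < length \<nu>"
    using assms True by (auto simp: Lambda_def)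
  hence "xi \<nu> ! (m - 1) = c \<longleftrightarrow>
      sum_list (take (c - 1) \<nu>) \<le> m - 1 \<and> m - 1 < sum_list (take c \<nu>)"
    using nth_xi_from_eq_iff[of "m - 1" \<nu> "c - 1" 1] True by (simp add: xi_eq_xi_from)
  moreover have "m \<in> Rset \<nu> c \<longleftrightarrow>
      sum_list (take (c - 1) \<nu>) \<le> m - 1 \<and> m - 1 < sum_list (take c \<nu>)"
    using assms(2) by (auto simp: Rset_def)
  ultimately show ?thesis using True by blast
next
  case False
  hence "take (c - 1) \<nu> = take c \<nu>" using assms(1)
    by (cases "c = 0") (auto simp: take_all Lambda_def)
  thus ?thesis using False by (auto simp: Rset_def)
qed

lemma Rset_subset: "\<nu> \<in> Lambda n r \<Longrightarrow> Rset \<nu> c \<subseteq> {1..r}"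
  using sum_list_append[of "take c \<nu>" "drop c \<nu>"]
  by (auto simp: Rset_def Lambda_def)

lemma count_list_eq_card: "count_list u i = card {k. k < length u \<and> u ! k = i}"
  by (simp add: count_list_eq_length_filter length_filter_conv_card eq_commute)

definition content :: "nat \<Rightarrow> nat list \<Rightarrow> nat list" where
  "content n w = map (count_list w) [1..<Suc n]"

lemma nth_content: "c \<in> {1..n} \<Longrightarrow> content n w ! (c - 1) = count_list w c"
  by (auto simp: content_def nth_upt)

lemma content_in_Lambda: "w \<in> zwords n r \<Longrightarrow> content n w \<in> Lambda n r"
  using sum_count_set[of w "{1..n}"]
  by (simp add: Lambda_def content_def zwords_def interv_sum_list_conv_sum_set_nat
      atLeastLessThanSuc_atLeastAtMost)

lemma content_xi: "\<nu> \<in> Lambda n r \<Longrightarrow> content n (xi \<nu>) = \<nu>"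
  by (rule nth_equalityI) (auto simp: content_def Lambda_def nth_upt count_list_xi)

lemma content_eq_iff_mset_eq:
  assumes "w \<in> zwords n r" "w' \<in> zwords n r"
  shows "content n w = content n w' \<longleftrightarrow> mset w = mset w'"
proof
  assume eq: "content n w = content n w'"
  show "mset w = mset w'"
  proof (rule multiset_eqI)
    fix c
    show "count (mset w) c = count (mset w') c"
    proof (cases "c \<in> {1..n}")
      case True
      thus ?thesis using eq nth_content[OF True] by (metis count_mset)
    next
      case False
      hence "c \<notin> set w" "c \<notin> set w'" using assms by (auto simp: zwords_def)
      thus ?thesis by (metis count_mset_0_iff)
    qed
  qed
qed (simp add: content_def flip: count_mset)

lemma content_swap_adj: "Suc a < length w \<Longrightarrow> content n (swap_adj a w) = content n w"
  by (simp add: content_def flip: count_mset)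

lemma zbvec_eq_hperm_xi_content:
  assumes w: "w \<in> zwords n r"
  obtains y where "y permutes {1..r}" "hperm n r (zbvec (xi (content n w))) y = zbvec w"
proof -
  let ?v = "xi (content n w)"
  have L: "content n w \<in> Lambda n r" using content_in_Lambda[OF w] .
  have "mset w = mset ?v"
    using content_eq_iff_mset_eq[OF w xi_zwords[OF L]] content_xi[OF L] by simp
  then obtain y where y: "y permutes {1..r}" "permute_word r ?v y = w"
      "inv_number w = perm_inv_number r y"
    using distinguished_perm_exists[OF sorted_xi[OF L] length_xi[OF L] zwordsD(1)[OF w]] by metis
  thus ?thesis using that hperm_sorted[OF sorted_xi[OF L] xi_zwords[OF L] y(1)] by simp
qed

section \<open>Characterising \<open>e\<^sub>A\<close> among \<open>H\<^sub>r(0)\<close>-equivariant operators\<close>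

lemma schur_prop_unique:
  assumes "schur_prop n r A T1" "schur_prop n r A T2"
  shows "T1 = T2"
proof (intro ext)
  fix w u
  show "T1 w u = T2 w u"
  proof (cases "w \<in> zwords n r \<and> u \<in> zwords n r")
    case False
    thus ?thesis using assms by (auto simp: schur_prop_def)
  next
    case True
    hence w: "w \<in> zwords n r" by simp
    obtain y where y: "y permutes {1..r}" "hperm n r (zbvec (xi (content n w))) y = zbvec w"
      using zbvec_eq_hperm_xi_content[OF w] by blast
    have "T1 w = zlin n r T1 (hperm n r (zbvec (xi (content n w))) y)"
      using y(2) zlin_zbvec[OF w] by simp
    also have "\<dots> = zlin n r T2 (hperm n r (zbvec (xi (content n w))) y)"
      using assms content_in_Lambda[OF w] y(1) unfolding schur_prop_def by simp
    also have "\<dots> = T2 w" using y(2) zlin_zbvec[OF w] by simp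
    finally show ?thesis by simp
  qed
qed

lemma eA_eqI: "schur_prop n r A T \<Longrightarrow> eA n r A = T"
  unfolding eA_def by (rule the_equality) (auto intro: schur_prop_unique)

definition supported :: "nat \<Rightarrow> nat \<Rightarrow> zop \<Rightarrow> bool" where
  "supported n r T \<longleftrightarrow> (\<forall>w u. w \<notin> zwords n r \<or> u \<notin> zwords n r \<longrightarrow> T w u = 0)"

text \<open>The two sides are the \<open>(w, u)\<close> matrix entries of \<open>\<pi>\<^sub>a\<^sub>+\<^sub>1\<close> followed by \<open>T\<close> and of \<open>T\<close>
  followed by \<open>\<pi>\<^sub>a\<^sub>+\<^sub>1\<close> (see \<open>zlin_hgen_basis_commute\<close>).\<close>

definition commutes_hecke_at :: "nat \<Rightarrow> nat \<Rightarrow> nat \<Rightarrow> zop \<Rightarrow> bool" where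
  "commutes_hecke_at n r a T \<longleftrightarrow> (\<forall>w\<in>zwords n r. \<forall>u\<in>zwords n r.
     (if w ! a < w ! Suc a then T (swap_adj a w) u else if w ! a = w ! Suc a then 0 else - T w u) =
     (if u ! Suc a < u ! a then T w (swap_adj a u) - T w u else 0))"

lemma hgen_basis_eq:
  "1 \<le> i \<Longrightarrow> hgen_basis i w =
    (if w ! (i - 1) < w ! i then zbvec (swap_adj (i - 1) w)
     else if w ! (i - 1) = w ! i then (\<lambda>_. 0) else (\<lambda>u. - zbvec w u))"
  by (simp add: hgen_basis_def swap_adj_def)

lemma hgen_basis_entry:
  assumes a: "Suc a < r" and w: "w \<in> zwords n r"
  shows "hgen_basis (Suc a) w u =
    (if w = swap_adj a u \<and> u \<in> zwords n r \<and> u ! Suc a < u ! a then 1 else 0) -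
    (if w = u \<and> u ! Suc a < u ! a then 1 else 0)"
proof -
  have lw: "length w = r" using zwordsD(1)[OF w] .
  have sw: "swap_adj a w \<in> zwords n r" using swap_adj_zwords[OF w a] .
  have hb: "hgen_basis (Suc a) w = (if w ! a < w ! Suc a then zbvec (swap_adj a w)
      else if w ! a = w ! Suc a then (\<lambda>_. 0) else (\<lambda>u. - zbvec w u))"
    using hgen_basis_eq[of "Suc a" w] by simp
  have swap_iff: "w = swap_adj a u \<and> u \<in> zwords n r \<longleftrightarrow> u = swap_adj a w"
    using a lw sw zwordsD(1)[of u n r] by auto
  have swap_desc: "u = swap_adj a w \<Longrightarrow> u ! Suc a < u ! a \<longleftrightarrow> w ! a < w ! Suc a"
    using a lw by (auto simp: swap_adj_nth_simps)
  consider "w ! a < w ! Suc a" | "w ! a = w ! Suc a" | "w ! Suc a < w ! a"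
    by linarith
  thus ?thesis
  proof cases
    case 1
    thus ?thesis using hb swap_iff swap_desc by (auto simp: zbvec_def)
  next
    case 2
    thus ?thesis using hb swap_iff swap_desc by auto
  next
    case 3
    thus ?thesis using hb swap_iff swap_desc by (auto simp: zbvec_def)
  qed
qed

lemma sum_mult_indicator:
  "finite Z \<Longrightarrow> (\<Sum>w\<in>Z. f w * (if w = c \<and> P then 1 else 0)) = (if c \<in> Z \<and> P then f c else (0::complex))"
  by (cases P) (simp_all add: if_distrib[where f="\<lambda>x. _ * x"] cong: if_cong)

lemma zlin_hgen_basis_commute:
  assumes sp: "supported n r T" and comm: "commutes_hecke_at n r a T"
    and a: "Suc a < r" and w: "w \<in> zwords n r"
  shows "zlin n r T (hgen_basis (Suc a) w) u = zlin n r (hgen_basis (Suc a)) (T w) u"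
proof -
  have sw: "swap_adj a w \<in> zwords n r" using swap_adj_zwords[OF w a] .
  have L: "zlin n r T (hgen_basis (Suc a) w) u =
      (if w ! a < w ! Suc a then T (swap_adj a w) u else if w ! a = w ! Suc a then 0 else - T w u)"
    using hgen_basis_eq[of "Suc a" w] zlin_zbvec[OF sw, of T] zlin_zbvec[OF w, of T]
      zlin_zero[of n r T] zlin_neg[of n r T "zbvec w"] by simp
  have "zlin n r (hgen_basis (Suc a)) (T w) u =
     (\<Sum>w'\<in>zwords n r. T w w' *
        ((if w' = swap_adj a u \<and> u \<in> zwords n r \<and> u ! Suc a < u ! a then 1 else 0) -
         (if w' = u \<and> u ! Suc a < u ! a then 1 else 0)))"
    unfolding zlin_def by (rule sum.cong[OF refl]) (simp add: hgen_basis_entry[OF a])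
  also have "\<dots> =
      (if swap_adj a u \<in> zwords n r \<and> (u \<in> zwords n r \<and> u ! Suc a < u ! a) then T w (swap_adj a u) else 0) -
      (if u \<in> zwords n r \<and> u ! Suc a < u ! a then T w u else 0)"
    by (simp only: right_diff_distrib sum_subtractf sum_mult_indicator[OF finite_zwords] conj_assoc)
  finally have R: "zlin n r (hgen_basis (Suc a)) (T w) u = \<dots>" .
  show ?thesis
  proof (cases "u \<in> zwords n r")
    case True
    thus ?thesis using comm w L R swap_adj_zwords[OF True a] unfolding commutes_hecke_at_def by auto
  next
    case False
    thus ?thesis using sp L R unfolding supported_def by auto
  qed
qed

lemma zlin_zlin:
  "zlin n r S (zlin n r H v) u = (\<Sum>w\<in>zwords n r. v w * zlin n r S (H w) u)"
proof -
  have "zlin n r S (zlin n r H v) u = (\<Sum>w'\<in>zwords n r. \<Sum>w\<in>zwords n r. v w * (H w w' * S w' u))"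
    by (simp add: zlin_def sum_distrib_right mult.assoc)
  also have "\<dots> = (\<Sum>w\<in>zwords n r. v w * zlin n r S (H w) u)"
    by (subst sum.swap) (simp add: zlin_def sum_distrib_left)
  finally show ?thesis .
qed

lemma zlin_hperm_commute:
  assumes sp: "supported n r T" and comm: "\<And>a. Suc a < r \<Longrightarrow> commutes_hecke_at n r a T"
    and y: "y permutes {1..r}"
  shows "zlin n r T (hperm n r v y) = hperm n r (zlin n r T v) y"
proof -
  have "zlin n r T (hgen n r i v) = hgen n r i (zlin n r T v)" if i: "1 \<le> i" "i < r" for i v
  proof (rule ext)
    fix u
    obtain a where ia: "i = Suc a" using i by (cases i) auto
    show "zlin n r T (hgen n r i v) u = hgen n r i (zlin n r T v) u"
      unfolding hgen_def zlin_zlin ia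
      using zlin_hgen_basis_commute[OF sp comm] i ia by simp
  qed
  moreover have "set is \<subseteq> {1..<r} \<Longrightarrow>
      zlin n r T (fold (hgen n r) is v) = fold (hgen n r) is (zlin n r T v)" for "is"
    by (induction "is" arbitrary: v) (simp_all add: calculation)
  ultimately show ?thesis unfolding hperm_def using reduced_word(1)[OF y] by blast
qed

lemma schur_propI:
  assumes sp: "supported n r T" and comm: "\<And>a. Suc a < r \<Longrightarrow> commutes_hecke_at n r a T"
    and val: "\<And>\<nu>. \<nu> \<in> Lambda n r \<Longrightarrow> T (xi \<nu>) = (if colsum n A = \<nu>
           then (\<lambda>u. \<Sum>x\<in>dcoset n r A (dA n r A). hperm n r (zbvec (xi (rowsum n A))) x u)
           else (\<lambda>_. 0))"
  shows "schur_prop n r A T"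
  unfolding schur_prop_def
proof (intro conjI ballI allI impI)
  fix w u assume "w \<notin> zwords n r \<or> u \<notin> zwords n r"
  thus "T w u = 0" using sp by (auto simp: supported_def)
next
  fix \<nu> y assume L: "\<nu> \<in> Lambda n r" and y: "y permutes {1..r}"
  have "zlin n r T (hperm n r (zbvec (xi \<nu>)) y) = hperm n r (T (xi \<nu>)) y"
    using zlin_hperm_commute[OF sp comm y] zlin_zbvec[OF xi_zwords[OF L]] by simp
  thus "zlin n r T (hperm n r (zbvec (xi \<nu>)) y) =
    (if colsum n A = \<nu>
     then (\<lambda>u. \<Sum>x\<in>dcoset n r A (dA n r A). hperm n r (hperm n r (zbvec (xi (rowsum n A))) x) y u)
     else (\<lambda>_. 0))"
    using val[OF L] hperm_zero
      hperm_sum[of n r "\<lambda>x. hperm n r (zbvec (xi (rowsum n A))) x" "dcoset n r A (dA n r A)" y]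
    by simp
qed

section \<open>The double coset of \<open>w\<^sub>A\<close>\<close>

definition realizes :: "nat \<Rightarrow> nat \<Rightarrow> (nat \<Rightarrow> nat \<Rightarrow> nat) \<Rightarrow> (nat \<Rightarrow> nat) \<Rightarrow> bool" where
  "realizes n r A x \<longleftrightarrow> x permutes {1..r} \<and>
      (\<forall>i\<in>{1..n}. \<forall>j\<in>{1..n}. A i j = card (Rset (rowsum n A) i \<inter> x ` Rset (colsum n A) j))"

definition matrix_words :: "nat \<Rightarrow> nat \<Rightarrow> (nat \<Rightarrow> nat \<Rightarrow> nat) \<Rightarrow> nat list set" where
  "matrix_words n r A = {u \<in> zwords n r. \<forall>i\<in>{1..n}. \<forall>j\<in>{1..n}.
      A i j = card {k. k < r \<and> xi (colsum n A) ! k = j \<and> u ! k = i}}"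

lemma wA_eq_some_realizes: "wA n r A = (SOME w. realizes n r A w)"
  by (simp add: wA_def realizes_def)

lemma realizes_permutes: "realizes n r A x \<Longrightarrow> x permutes {1..r}"
  by (simp add: realizes_def)

lemma card_Rset_Int_image:
  assumes ro: "ro \<in> Lambda n r" and co: "co \<in> Lambda n r" and x: "x permutes {1..r}"
    and ij: "i \<in> {1..n}" "j \<in> {1..n}"
  shows "card (Rset ro i \<inter> x ` Rset co j) =
    card {k. k < r \<and> xi co ! k = j \<and> permute_word r (xi ro) x ! k = i}"
proof -
  let ?K = "{k. k < r \<and> xi co ! k = j \<and> permute_word r (xi ro) x ! k = i}"
  have eq: "Rset ro i \<inter> x ` Rset co j = (\<lambda>k. x (Suc k)) ` ?K"
  proof (intro set_eqI iffI)
    fix m assume "m \<in> Rset ro i \<inter> x ` Rset co j"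
    then obtain m' where m: "m \<in> Rset ro i" "m' \<in> Rset co j" "m = x m'" by auto
    have m'r: "m' \<in> {1..r}" using subsetD[OF Rset_subset[OF co] m(2)] .
    have mr: "m \<in> {1..r}" using subsetD[OF Rset_subset[OF ro] m(1)] .
    have c1: "xi co ! (m' - 1) = j" using mem_Rset_iff[OF co m'r] m(2) by simp
    have c2: "xi ro ! (m - 1) = i" using mem_Rset_iff[OF ro mr] m(1) by simp
    have "m' - 1 \<in> ?K" using c1 c2 m'r m(3) by (auto simp: nth_permute_word)
    moreover have "m = x (Suc (m' - 1))" using m'r m(3) by simp
    ultimately show "m \<in> (\<lambda>k. x (Suc k)) ` ?K" by blast
  next
    fix m assume "m \<in> (\<lambda>k. x (Suc k)) ` ?K"
    then obtain k where k: "k < r" "xi co ! k = j" "permute_word r (xi ro) x ! k = i" "m = x (Suc k)" by auto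
    have kr: "Suc k \<in> {1..r}" using k by simp
    have mr: "m \<in> {1..r}" using permutes_in_image[OF x, THEN iffD2, OF kr] k(4) by simp
    have "Suc k \<in> Rset co j" using mem_Rset_iff[OF co kr] k ij by simp
    moreover have "m \<in> Rset ro i" using mem_Rset_iff[OF ro mr] k ij by (simp add: nth_permute_word)
    ultimately show "m \<in> Rset ro i \<inter> x ` Rset co j" using k(4) by blast
  qed
  have inj: "inj_on (\<lambda>k. x (Suc k)) ?K"
    using permutes_inj[OF x] by (auto simp: inj_on_def inj_def)
  show ?thesis unfolding eq by (rule card_image[OF inj])
qed

lemma realizes_iff_matrix_words:
  assumes ro: "rowsum n A \<in> Lambda n r" and co: "colsum n A \<in> Lambda n r" and x: "x permutes {1..r}"
  shows "realizes n r A x \<longleftrightarrow> permute_word r (xi (rowsum n A)) x \<in> matrix_words n r A"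
  using card_Rset_Int_image[OF ro co x] permute_word_zwords[OF xi_zwords[OF ro] x] x
  by (simp add: realizes_def matrix_words_def)

lemma realizes_comp_young:
  assumes w: "realizes n r A w" and a: "a \<in> young n r (rowsum n A)" and b: "b \<in> young n r (colsum n A)"
  shows "realizes n r A (a \<circ> w \<circ> b)"
proof -
  have ap: "a permutes {1..r}" and aR: "\<And>i. i \<in> {1..n} \<Longrightarrow> a ` Rset (rowsum n A) i = Rset (rowsum n A) i"
    using a by (auto simp: young_def)
  have bp: "b permutes {1..r}" and bR: "\<And>j. j \<in> {1..n} \<Longrightarrow> b ` Rset (colsum n A) j = Rset (colsum n A) j"
    using b by (auto simp: young_def)
  have wp: "w permutes {1..r}" using realizes_permutes[OF w] .
  have perm: "a \<circ> w \<circ> b permutes {1..r}" using permutes_compose[OF bp permutes_compose[OF wp ap]] by simp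
  have "A i j = card (Rset (rowsum n A) i \<inter> (a \<circ> w \<circ> b) ` Rset (colsum n A) j)"
    if ij: "i \<in> {1..n}" "j \<in> {1..n}" for i j
  proof -
    have "(a \<circ> w \<circ> b) ` Rset (colsum n A) j = (a \<circ> w) ` (b ` Rset (colsum n A) j)"
      by (simp only: image_comp)
    also have "\<dots> = (a \<circ> w) ` Rset (colsum n A) j" using bR[OF ij(2)] by simp
    also have "\<dots> = a ` (w ` Rset (colsum n A) j)" by (simp only: image_comp)
    finally have "(a \<circ> w \<circ> b) ` Rset (colsum n A) j = a ` (w ` Rset (colsum n A) j)" .
    hence "Rset (rowsum n A) i \<inter> (a \<circ> w \<circ> b) ` Rset (colsum n A) j =
        a ` (Rset (rowsum n A) i \<inter> w ` Rset (colsum n A) j)"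
      using image_Int[OF permutes_inj[OF ap]] aR[OF ij(1)] by simp
    hence "card (Rset (rowsum n A) i \<inter> (a \<circ> w \<circ> b) ` Rset (colsum n A) j) =
        card (Rset (rowsum n A) i \<inter> w ` Rset (colsum n A) j)"
      using card_image[OF inj_on_subset[OF permutes_inj[OF ap] subset_UNIV]] by simp
    thus ?thesis using w ij by (simp add: realizes_def)
  qed
  thus ?thesis using perm by (simp add: realizes_def)
qed

lemma permutes_matching_fibres:
  assumes fin: "finite S" and fib: "\<And>c. card {s\<in>S. f s = c} = card {s\<in>S. g s = c}"
  obtains b where "b permutes S" "\<And>s. s \<in> S \<Longrightarrow> g (b s) = f s"
proof -
  have "\<forall>c. \<exists>h. bij_betw h {s\<in>S. f s = c} {s\<in>S. g s = c}"
    using fin fib by (intro allI finite_same_card_bij) auto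
  hence "\<exists>h. \<forall>c. bij_betw (h c) {s\<in>S. f s = c} {s\<in>S. g s = c}"
    by (rule choice)
  then obtain h where h: "\<And>c. bij_betw (h c) {s\<in>S. f s = c} {s\<in>S. g s = c}"
    by blast
  define b where "b s = (if s \<in> S then h (f s) s else s)" for s
  have b: "b s \<in> S \<and> g (b s) = f s" if "s \<in> S" for s
    using h[of "f s"] that by (auto simp: b_def bij_betw_def)
  have "bij_betw b S S"
  proof (rule bij_betw_imageI)
    show "inj_on b S"
    proof (rule inj_onI)
      fix s s' assume s: "s \<in> S" "s' \<in> S" "b s = b s'"
      hence "f s = f s'" using b by metis
      thus "s = s'" using h[of "f s"] s by (auto simp: b_def bij_betw_def inj_on_def)
    qed
    have "t \<in> b ` S" if t: "t \<in> S" for t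
    proof -
      have "t \<in> h (g t) ` {s\<in>S. f s = g t}" using h[of "g t"] t by (simp add: bij_betw_def)
      then obtain s where s: "s \<in> S" "f s = g t" "t = h (g t) s" by blast
      hence "b s = t" by (simp add: b_def)
      thus ?thesis using s(1) by blast
    qed
    thus "b ` S = S" using b by blast
  qed
  hence "b permutes S" by (rule bij_imp_permutes) (simp add: b_def)
  thus ?thesis using that b by blast
qed

lemma youngI:
  assumes L: "\<nu> \<in> Lambda n r" and p: "p permutes {1..r}"
    and pres: "\<And>k. k \<in> {1..r} \<Longrightarrow> xi \<nu> ! (p k - 1) = xi \<nu> ! (k - 1)"
  shows "p \<in> young n r \<nu>"
  unfolding young_def
proof (intro CollectI conjI ballI p)
  fix j assume j: "j \<in> {1..n}"
  show "p ` Rset \<nu> j = Rset \<nu> j"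
  proof (intro set_eqI iffI)
    fix m assume "m \<in> p ` Rset \<nu> j"
    then obtain k where k: "k \<in> Rset \<nu> j" "m = p k" by auto
    have kr: "k \<in> {1..r}" using subsetD[OF Rset_subset[OF L] k(1)] .
    have mr: "m \<in> {1..r}" using permutes_in_image[OF p, THEN iffD2, OF kr] k by simp
    show "m \<in> Rset \<nu> j" using mem_Rset_iff[OF L kr] mem_Rset_iff[OF L mr] k pres[OF kr] by simp
  next
    fix m assume m: "m \<in> Rset \<nu> j"
    have mr: "m \<in> {1..r}" using subsetD[OF Rset_subset[OF L] m] .
    let ?k = "inv p m"
    have pk: "p ?k = m" using permutes_inverses(1)[OF p] by simp
    have kr: "?k \<in> {1..r}" using permutes_in_image[OF permutes_inv[OF p]] mr by simp
    have "?k \<in> Rset \<nu> j" using mem_Rset_iff[OF L kr] mem_Rset_iff[OF L mr] m pres[OF kr] pk by simp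
    thus "m \<in> p ` Rset \<nu> j" using pk by (metis imageI)
  qed
qed

lemma card_letter_pairs:
  assumes ro: "rowsum n A \<in> Lambda n r" and co: "colsum n A \<in> Lambda n r" and x: "realizes n r A x"
  shows "card {k\<in>{1..r}. (xi (rowsum n A) ! (x k - 1), xi (colsum n A) ! (k - 1)) = (i, j)} =
    (if i \<in> {1..n} \<and> j \<in> {1..n} then A i j else 0)"
proof -
  let ?K = "{k. k < r \<and> xi (colsum n A) ! k = j \<and> permute_word r (xi (rowsum n A)) x ! k = i}"
  have xp: "x permutes {1..r}" using realizes_permutes[OF x] .
  have "{k\<in>{1..r}. (xi (rowsum n A) ! (x k - 1), xi (colsum n A) ! (k - 1)) = (i, j)} = Suc ` ?K"
  proof (intro set_eqI iffI)
    fix m assume "m \<in> {k\<in>{1..r}. (xi (rowsum n A) ! (x k - 1), xi (colsum n A) ! (k - 1)) = (i, j)}"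
    hence "m = Suc (m - 1)" "m - 1 \<in> ?K" by (auto simp: nth_permute_word)
    thus "m \<in> Suc ` ?K" by (rule image_eqI)
  next
    fix m assume "m \<in> Suc ` ?K"
    thus "m \<in> {k\<in>{1..r}. (xi (rowsum n A) ! (x k - 1), xi (colsum n A) ! (k - 1)) = (i, j)}"
      by (auto simp: nth_permute_word)
  qed
  hence "card {k\<in>{1..r}. (xi (rowsum n A) ! (x k - 1), xi (colsum n A) ! (k - 1)) = (i, j)} = card ?K"
    by (simp add: card_image)
  moreover have "?K = {}" if "\<not> (i \<in> {1..n} \<and> j \<in> {1..n})"
    using that zwordsD(2)[OF xi_zwords[OF co]] zwordsD(2)[OF permute_word_zwords[OF xi_zwords[OF ro] xp]]
    by blast
  ultimately show ?thesis
    using card_Rset_Int_image[OF ro co xp] x by (auto simp: realizes_def)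
qed

text \<open>Two permutations realizing \<open>A\<close> pair the letters of \<open>\<xi>\<^sub>r\<^sub>o\<^sub>(\<^sub>A\<^sub>)\<close> and \<open>\<xi>\<^sub>c\<^sub>o\<^sub>(\<^sub>A\<^sub>)\<close> with the same
  multiplicities; a permutation \<open>b\<close> of positions matching the pairings lies in the column Young
  subgroup, and the discrepancy \<open>x (w b)\<^sup>-\<^sup>1\<close> then lies in the row Young subgroup.\<close>

lemma realizes_in_dcoset:
  assumes ro: "rowsum n A \<in> Lambda n r" and co: "colsum n A \<in> Lambda n r"
    and x: "realizes n r A x" and w: "realizes n r A w"
  shows "x \<in> dcoset n r A w"
proof -
  let ?ro = "rowsum n A" and ?co = "colsum n A"
  have xp: "x permutes {1..r}" and wp: "w permutes {1..r}" using x w by (auto dest: realizes_permutes)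
  define f where "f k = (xi ?ro ! (x k - 1), xi ?co ! (k - 1))" for k
  define g where "g k = (xi ?ro ! (w k - 1), xi ?co ! (k - 1))" for k
  have fib: "card {k\<in>{1..r}. f k = c} = card {k\<in>{1..r}. g k = c}" for c
    unfolding f_def g_def
    by (cases c) (simp only: card_letter_pairs[OF ro co x] card_letter_pairs[OF ro co w])
  obtain b where bp: "b permutes {1..r}" and gb: "\<And>k. k \<in> {1..r} \<Longrightarrow> g (b k) = f k"
    using permutes_matching_fibres[OF finite_atLeastAtMost fib] by blast
  have bY: "b \<in> young n r ?co"
    by (rule youngI[OF co bp]) (use gb in \<open>auto simp: f_def g_def\<close>)
  define c where "c = w \<circ> b"
  have cp: "c permutes {1..r}" using permutes_compose[OF bp wp] by (simp add: c_def)
  define a where "a = x \<circ> inv c"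
  have ap: "a permutes {1..r}" using permutes_compose[OF permutes_inv[OF cp] xp] by (simp add: a_def)
  have aY: "a \<in> young n r ?ro"
  proof (rule youngI[OF ro ap])
    fix m assume m: "m \<in> {1..r}"
    let ?k = "inv c m"
    have "?k \<in> {1..r}" using permutes_in_image[OF permutes_inv[OF cp]] m by simp
    hence "xi ?ro ! (w (b ?k) - 1) = xi ?ro ! (x ?k - 1)" using gb by (simp add: f_def g_def)
    moreover have "c ?k = m" using permutes_inverses(1)[OF cp] by simp
    ultimately show "xi ?ro ! (a m - 1) = xi ?ro ! (m - 1)" by (simp add: a_def c_def)
  qed
  have "a \<circ> w \<circ> b = x \<circ> (inv c \<circ> c)" by (simp add: a_def c_def o_assoc)
  hence "x = a \<circ> w \<circ> b" using permutes_inv_o(2)[OF cp] by simp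
  thus ?thesis using aY bY unfolding dcoset_def by blast
qed

lemma rowsum_nth: "i \<in> {1..n} \<Longrightarrow> rowsum n A ! (i - 1) = (\<Sum>j=1..n. A i j)"
  by (auto simp: rowsum_def nth_upt)

lemma colsum_nth: "j \<in> {1..n} \<Longrightarrow> colsum n A ! (j - 1) = (\<Sum>i=1..n. A i j)"
  by (auto simp: colsum_def nth_upt)

lemma content_matrix_word:
  assumes co: "colsum n A \<in> Lambda n r" and u: "u \<in> matrix_words n r A"
  shows "content n u = rowsum n A"
proof (rule nth_equalityI)
  show "length (content n u) = length (rowsum n A)" by (simp add: content_def rowsum_def)
next
  fix k assume "k < length (content n u)"
  hence i: "Suc k \<in> {1..n}" by (simp add: content_def)
  let ?i = "Suc k"
  have uz: "u \<in> zwords n r"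
    and uA: "\<forall>i\<in>{1..n}. \<forall>j\<in>{1..n}. A i j = card {k. k < r \<and> xi (colsum n A) ! k = j \<and> u ! k = i}"
    using u by (auto simp: matrix_words_def)
  have lu: "length u = r" using uz zwordsD(1) by blast
  have "content n u ! k = count_list u ?i" using nth_content[OF i] by simp
  also have "\<dots> = card {k. k < r \<and> u ! k = ?i}" using lu by (simp add: count_list_eq_card)
  also have "{k. k < r \<and> u ! k = ?i} = (\<Union>j\<in>{1..n}. {k. k < r \<and> xi (colsum n A) ! k = j \<and> u ! k = ?i})"
  proof (intro set_eqI iffI)
    fix m assume m: "m \<in> {k. k < r \<and> u ! k = ?i}"
    hence "xi (colsum n A) ! m \<in> {1..n}" using zwordsD(2)[OF xi_zwords[OF co]] by simp
    thus "m \<in> (\<Union>j\<in>{1..n}. {k. k < r \<and> xi (colsum n A) ! k = j \<and> u ! k = ?i})" using m by blast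
  qed auto
  also have "card \<dots> = (\<Sum>j\<in>{1..n}. card {k. k < r \<and> xi (colsum n A) ! k = j \<and> u ! k = ?i})"
    by (rule card_UN_disjoint) auto
  also have "\<dots> = (\<Sum>j\<in>{1..n}. A ?i j)" using uA i by simp
  also have "\<dots> = rowsum n A ! k" using rowsum_nth[OF i] by simp
  finally show "content n u ! k = rowsum n A ! k" .
qed

lemma rowsum_in_Lambda:
  assumes co: "colsum n A \<in> Lambda n r" and u: "u \<in> matrix_words n r A"
  shows "rowsum n A \<in> Lambda n r"
  using content_matrix_word[OF co u] content_in_Lambda[of u n r] u by (simp add: matrix_words_def)

lemma matrix_word_distinguished:
  assumes ro: "rowsum n A \<in> Lambda n r" and co: "colsum n A \<in> Lambda n r" and u: "u \<in> matrix_words n r A"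
  obtains y where "y permutes {1..r}" "permute_word r (xi (rowsum n A)) y = u" "inv_number u = perm_inv_number r y"
proof -
  let ?v = "xi (rowsum n A)"
  have uz: "u \<in> zwords n r" using u by (simp add: matrix_words_def)
  have "mset u = mset ?v"
    using content_eq_iff_mset_eq[OF uz xi_zwords[OF ro]] content_matrix_word[OF co u] content_xi[OF ro]
    by simp
  thus ?thesis
    using distinguished_perm_exists[OF sorted_xi[OF ro] length_xi[OF ro] zwordsD(1)[OF uz]] that by blast
qed

lemma realizes_wA:
  assumes ro: "rowsum n A \<in> Lambda n r" and co: "colsum n A \<in> Lambda n r" and ne: "matrix_words n r A \<noteq> {}"
  shows "realizes n r A (wA n r A)"
proof -
  obtain u where u: "u \<in> matrix_words n r A" using ne by blast
  obtain y where y: "y permutes {1..r}" "permute_word r (xi (rowsum n A)) y = u"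
    using matrix_word_distinguished[OF ro co u] by metis
  have "realizes n r A y" using realizes_iff_matrix_words[OF ro co y(1)] y(2) u by simp
  thus ?thesis unfolding wA_eq_some_realizes by (rule someI[where P="realizes n r A"])
qed

lemma id_in_young: "id \<in> young n r \<nu>"
  by (simp add: young_def permutes_id)

lemma dA_in_dcoset: "realizes n r A (wA n r A) \<Longrightarrow> dA n r A \<in> dcoset n r A (wA n r A)"
proof -
  have e: "wA n r A = id \<circ> wA n r A \<circ> id" by simp
  have "\<exists>a b. wA n r A = a \<circ> wA n r A \<circ> b \<and> a \<in> young n r (rowsum n A) \<and> b \<in> young n r (colsum n A)"
    by (intro exI[of _ id] conjI e id_in_young)
  hence "wA n r A \<in> dcoset n r A (wA n r A)" by (simp only: dcoset_def mem_Collect_eq)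
  thus ?thesis unfolding dA_def by (rule arg_min_natI[where P="\<lambda>x. x \<in> dcoset n r A (wA n r A)"])
qed

lemma dcoset_eq_realizes:
  assumes ro: "rowsum n A \<in> Lambda n r" and co: "colsum n A \<in> Lambda n r" and w: "realizes n r A w"
  shows "dcoset n r A w = {x. realizes n r A x}"
proof (intro set_eqI iffI)
  fix x assume "x \<in> dcoset n r A w"
  thus "x \<in> {x. realizes n r A x}" using realizes_comp_young[OF w] by (auto simp: dcoset_def)
next
  fix x assume "x \<in> {x. realizes n r A x}"
  thus "x \<in> dcoset n r A w" using realizes_in_dcoset[OF ro co _ w] by simp
qed

lemma dcoset_dA_eq_realizes:
  assumes ro: "rowsum n A \<in> Lambda n r" and co: "colsum n A \<in> Lambda n r" and ne: "matrix_words n r A \<noteq> {}"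
  shows "dcoset n r A (dA n r A) = {x. realizes n r A x}"
proof -
  have w: "realizes n r A (wA n r A)" using realizes_wA[OF ro co ne] .
  have "dA n r A \<in> {x. realizes n r A x}" using dA_in_dcoset[OF w] dcoset_eq_realizes[OF ro co w] by simp
  thus ?thesis using dcoset_eq_realizes[OF ro co] by simp
qed

lemma card_distinguished_realizers:
  assumes ro: "rowsum n A \<in> Lambda n r" and co: "colsum n A \<in> Lambda n r"
  shows "card {x. realizes n r A x \<and>
      inv_number (permute_word r (xi (rowsum n A)) x) = perm_inv_number r x \<and>
      permute_word r (xi (rowsum n A)) x = u} = (if u \<in> matrix_words n r A then 1 else 0)"
proof (cases "u \<in> matrix_words n r A")
  case True
  let ?v = "xi (rowsum n A)"
  obtain y where y: "y permutes {1..r}" "permute_word r ?v y = u" "inv_number u = perm_inv_number r y"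
    using matrix_word_distinguished[OF ro co True] by metis
  have "realizes n r A y" using realizes_iff_matrix_words[OF ro co y(1)] y(2) True by simp
  moreover have "x = y"
    if "x permutes {1..r}" "inv_number (permute_word r ?v x) = perm_inv_number r x"
      "permute_word r ?v x = u" for x
    using distinguished_perm_unique[OF sorted_xi[OF ro] length_xi[OF ro] that(1) y(1)] that y by simp
  ultimately have "{x. realizes n r A x \<and> inv_number (permute_word r ?v x) = perm_inv_number r x \<and>
      permute_word r ?v x = u} = {y}"
    using y by (blast dest: realizes_permutes)
  thus ?thesis using True by simp
next
  case False
  hence "{x. realizes n r A x \<and> inv_number (permute_word r (xi (rowsum n A)) x) = perm_inv_number r x \<and>
      permute_word r (xi (rowsum n A)) x = u} = {}"
    using realizes_iff_matrix_words[OF ro co] by (blast dest: realizes_permutes)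
  thus ?thesis using False by (simp only: card.empty if_False)
qed

text \<open>This is the value of \<open>e\<^sub>A\<close> on \<open>\<xi>\<^sub>c\<^sub>o\<^sub>(\<^sub>A\<^sub>)\<close> prescribed by \<open>schur_prop\<close>.\<close>

lemma sum_dcoset_hperm_xi:
  assumes ro: "rowsum n A \<in> Lambda n r" and co: "colsum n A \<in> Lambda n r" and ne: "matrix_words n r A \<noteq> {}"
  shows "(\<lambda>u. \<Sum>x\<in>dcoset n r A (dA n r A). hperm n r (zbvec (xi (rowsum n A))) x u) =
         (\<lambda>u. if u \<in> matrix_words n r A then 1 else 0)"
proof (rule ext)
  fix u
  let ?v = "xi (rowsum n A)"
  let ?X = "{x. realizes n r A x}"
  have fin: "finite ?X"
    by (rule finite_subset[OF _ finite_permutations[of "{1..r}"]]) (auto simp: realizes_def)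
  have "(\<Sum>x\<in>dcoset n r A (dA n r A). hperm n r (zbvec ?v) x u) =
      (\<Sum>x\<in>?X. if inv_number (permute_word r ?v x) = perm_inv_number r x \<and> permute_word r ?v x = u
        then 1 else 0)"
    unfolding dcoset_dA_eq_realizes[OF ro co ne]
  proof (rule sum.cong[OF refl])
    fix x assume "x \<in> ?X"
    thus "hperm n r (zbvec ?v) x u =
        (if inv_number (permute_word r ?v x) = perm_inv_number r x \<and> permute_word r ?v x = u then 1 else 0)"
      using hperm_sorted[OF sorted_xi[OF ro] xi_zwords[OF ro] realizes_permutes] by (auto simp: zbvec_def)
  qed
  also have "\<dots> = of_nat (card {x\<in>?X. inv_number (permute_word r ?v x) = perm_inv_number r x \<and>
      permute_word r ?v x = u})"
    using fin by (simp add: sum.inter_filter[symmetric])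
  also have "\<dots> = (if u \<in> matrix_words n r A then 1 else 0)"
    using card_distinguished_realizers[OF ro co, of u] by simp
  finally show "(\<Sum>x\<in>dcoset n r A (dA n r A). hperm n r (zbvec ?v) x u) =
      (if u \<in> matrix_words n r A then 1 else 0)" .
qed

section \<open>Equivariance of the coproduct operators\<close>

text \<open>\<open>\<pi>\<^sub>a\<^sub>+\<^sub>1\<close> only touches the tensor factors \<open>a\<close> and \<open>a + 1\<close>, so equivariance of a tensor product of
  operators reduces to the following condition on the two-factor operator
  \<open>B x y x' y'\<close> (the entry from \<open>\<xi>\<^sub>x \<otimes> \<xi>\<^sub>y\<close> to \<open>\<xi>\<^sub>x\<^sub>' \<otimes> \<xi>\<^sub>y\<^sub>'\<close>).\<close>

definition two_site_commuting :: "(nat \<Rightarrow> nat \<Rightarrow> nat \<Rightarrow> nat \<Rightarrow> complex) \<Rightarrow> bool" where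
  "two_site_commuting B \<longleftrightarrow> (\<forall>x y x' y'.
     (if x < y then B y x x' y' else if x = y then 0 else - B x y x' y') =
     (if y' < x' then B x y y' x' - B x y x' y' else 0))"

lemma commutes_hecke_at_product:
  assumes a: "Suc a < r" and tw: "two_site_commuting B"
    and rest: "\<And>w u. w \<in> zwords n r \<Longrightarrow> u \<in> zwords n r \<Longrightarrow>
      R (swap_adj a w) u = R w u \<and> R w (swap_adj a u) = R w u"
    and T: "\<And>w u. w \<in> zwords n r \<Longrightarrow> u \<in> zwords n r \<Longrightarrow>
      T w u = B (w ! a) (w ! Suc a) (u ! a) (u ! Suc a) * R w u"
  shows "commutes_hecke_at n r a T"
  unfolding commutes_hecke_at_def
proof (intro ballI)
  fix w u assume w: "w \<in> zwords n r" and u: "u \<in> zwords n r"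
  have lw: "length w = r" and lu: "length u = r" using w u zwordsD(1) by blast+
  have sw: "swap_adj a w \<in> zwords n r" and su: "swap_adj a u \<in> zwords n r" using swap_adj_zwords a w u by blast+
  have t1: "T (swap_adj a w) u = B (w ! Suc a) (w ! a) (u ! a) (u ! Suc a) * R w u"
    using T[OF sw u] rest[OF w u] a lw by (simp add: swap_adj_nth_simps)
  have t2: "T w (swap_adj a u) = B (w ! a) (w ! Suc a) (u ! Suc a) (u ! a) * R w u"
    using T[OF w su] rest[OF w u] a lu by (simp add: swap_adj_nth_simps)
  have t3: "T w u = B (w ! a) (w ! Suc a) (u ! a) (u ! Suc a) * R w u" using T[OF w u] .
  have E: "(if w ! a < w ! Suc a then B (w ! Suc a) (w ! a) (u ! a) (u ! Suc a)
            else if w ! a = w ! Suc a then 0 else - B (w ! a) (w ! Suc a) (u ! a) (u ! Suc a)) =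
           (if u ! Suc a < u ! a
            then B (w ! a) (w ! Suc a) (u ! Suc a) (u ! a) - B (w ! a) (w ! Suc a) (u ! a) (u ! Suc a)
            else 0)"
    using tw unfolding two_site_commuting_def by blast
  show "(if w ! a < w ! Suc a then T (swap_adj a w) u else if w ! a = w ! Suc a then 0 else - T w u) =
        (if u ! Suc a < u ! a then T w (swap_adj a u) - T w u else 0)"
    unfolding t1 t2 t3
    by (cases "w ! a < w ! Suc a"; cases "w ! a = w ! Suc a"; cases "u ! Suc a < u ! a")
       (use E in \<open>simp_all add: left_diff_distrib\<close>)
qed

lemma commutes_hecke_at_sum:
  assumes "\<And>j. j \<in> J \<Longrightarrow> commutes_hecke_at n r a (T j)"
  shows "commutes_hecke_at n r a (\<lambda>w u. \<Sum>j\<in>J. T j w u)"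
  unfolding commutes_hecke_at_def
proof (intro ballI)
  fix w u assume w: "w \<in> zwords n r" and u: "u \<in> zwords n r"
  have e: "\<And>j. j \<in> J \<Longrightarrow> (if w ! a < w ! Suc a then T j (swap_adj a w) u else if w ! a = w ! Suc a then 0 else - T j w u) =
        (if u ! Suc a < u ! a then T j w (swap_adj a u) - T j w u else 0)"
    using assms w u unfolding commutes_hecke_at_def by blast
  show "(if w ! a < w ! Suc a then (\<Sum>j\<in>J. T j (swap_adj a w) u) else if w ! a = w ! Suc a then 0 else - (\<Sum>j\<in>J. T j w u)) =
        (if u ! Suc a < u ! a then (\<Sum>j\<in>J. T j w (swap_adj a u)) - (\<Sum>j\<in>J. T j w u) else 0)"
  proof -
    have "(if w ! a < w ! Suc a then (\<Sum>j\<in>J. T j (swap_adj a w) u) else if w ! a = w ! Suc a then 0 else - (\<Sum>j\<in>J. T j w u)) =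
      (\<Sum>j\<in>J. (if w ! a < w ! Suc a then T j (swap_adj a w) u else if w ! a = w ! Suc a then 0 else - T j w u))"
      by (simp add: sum_negf)
    also have "\<dots> = (\<Sum>j\<in>J. (if u ! Suc a < u ! a then T j w (swap_adj a u) - T j w u else 0))"
      by (rule sum.cong[OF refl]) (rule e)
    also have "\<dots> = (if u ! Suc a < u ! a then (\<Sum>j\<in>J. T j w (swap_adj a u)) - (\<Sum>j\<in>J. T j w u) else 0)"
      by (simp add: sum_subtractf)
    finally show ?thesis .
  qed
qed

lemma commutes_hecke_at_add:
  assumes "commutes_hecke_at n r a T1" "commutes_hecke_at n r a T2"
  shows "commutes_hecke_at n r a (\<lambda>w u. T1 w u + T2 w u)"
proof -
  have "commutes_hecke_at n r a (\<lambda>w u. \<Sum>j\<in>{True, False}. (if j then T1 else T2) w u)"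
    by (rule commutes_hecke_at_sum) (use assms in auto)
  thus ?thesis by simp
qed

lemma commutes_hecke_at_cong:
  assumes a: "Suc a < r" and l: "commutes_hecke_at n r a T"
    and e: "\<And>w u. w \<in> zwords n r \<Longrightarrow> u \<in> zwords n r \<Longrightarrow> T w u = T' w u"
  shows "commutes_hecke_at n r a T'"
  unfolding commutes_hecke_at_def
proof (intro ballI)
  fix w u assume w: "w \<in> zwords n r" and u: "u \<in> zwords n r"
  have sw: "swap_adj a w \<in> zwords n r" and su: "swap_adj a u \<in> zwords n r"
    using swap_adj_zwords a w u by blast+
  show "(if w ! a < w ! Suc a then T' (swap_adj a w) u else if w ! a = w ! Suc a then 0 else - T' w u) =
        (if u ! Suc a < u ! a then T' w (swap_adj a u) - T' w u else 0)"
    using l w u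
    unfolding commutes_hecke_at_def e[OF sw u, symmetric] e[OF w su, symmetric] e[OF w u, symmetric]
    by blast
qed

definition restrict_content :: "nat \<Rightarrow> nat list \<Rightarrow> zop \<Rightarrow> zop" where
  "restrict_content n l T = (\<lambda>w u. if content n w = l then T w u else 0)"

lemma commutes_hecke_at_restrict_content:
  assumes a: "Suc a < r" and comm: "commutes_hecke_at n r a T"
  shows "commutes_hecke_at n r a (restrict_content n l T)"
  unfolding commutes_hecke_at_def
proof (intro ballI)
  fix w u assume w: "w \<in> zwords n r" and u: "u \<in> zwords n r"
  have c: "content n (swap_adj a w) = content n w"
    using content_swap_adj a zwordsD(1)[OF w] by simp
  have "(if w ! a < w ! Suc a then T (swap_adj a w) u else if w ! a = w ! Suc a then 0 else - T w u) =
        (if u ! Suc a < u ! a then T w (swap_adj a u) - T w u else 0)"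
    using comm w u unfolding commutes_hecke_at_def by blast
  thus "(if w ! a < w ! Suc a then restrict_content n l T (swap_adj a w) u
         else if w ! a = w ! Suc a then 0 else - restrict_content n l T w u) =
        (if u ! Suc a < u ! a then restrict_content n l T w (swap_adj a u) - restrict_content n l T w u
         else 0)"
    using c by (auto simp: restrict_content_def split: if_splits)
qed

definition delta_factors ::
  "(nat \<Rightarrow> nat \<Rightarrow> complex) \<Rightarrow> (nat \<Rightarrow> nat \<Rightarrow> complex) \<Rightarrow> (nat \<Rightarrow> nat \<Rightarrow> complex) \<Rightarrow>
   nat \<Rightarrow> nat \<Rightarrow> nat \<Rightarrow> nat \<Rightarrow> complex" where
  "delta_factors L M R j = (\<lambda>p. if p < j then L else if p = j then M else R)"

lemma prod_lessThan_split_adjacent: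
  "Suc a < r \<Longrightarrow> (\<Prod>p<r. f p) = f a * f (Suc a) * (\<Prod>p\<in>{..<r} - {a, Suc a}. f p)"
  by (subst prod.remove[of _ a]) (auto simp: prod.remove[of _ "Suc a"] insert_Diff_if mult.assoc
      simp flip: Diff_insert2)

lemma sum_lessThan_split_adjacent:
  "Suc a < r \<Longrightarrow> (\<Sum>p<r. f p) = (\<Sum>p\<in>{..<r} - {a, Suc a}. f p) + (f a + f (Suc a))"
  by (subst sum.remove[of _ a]) (auto simp: sum.remove[of _ "Suc a"] insert_Diff_if add_ac
      simp flip: Diff_insert2)

definition tensor_rest :: "nat \<Rightarrow> nat \<Rightarrow> (nat \<Rightarrow> nat \<Rightarrow> nat \<Rightarrow> complex) \<Rightarrow> zop" where
  "tensor_rest r a ops w u = (\<Prod>p\<in>{..<r} - {a, Suc a}. ops p (w ! p) (u ! p))"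

lemma tensor_rest_swap_adj:
  assumes a: "Suc a < r" and w: "w \<in> zwords n r" and u: "u \<in> zwords n r"
  shows "tensor_rest r a ops (swap_adj a w) u = tensor_rest r a ops w u \<and>
         tensor_rest r a ops w (swap_adj a u) = tensor_rest r a ops w u"
  using a zwordsD(1)[OF w] zwordsD(1)[OF u]
  unfolding tensor_rest_def by (auto intro!: prod.cong simp: swap_adj_nth_simps(3))

lemma tensor_op_eq_tensor_rest:
  assumes "Suc a < r" "w \<in> zwords n r" "u \<in> zwords n r"
  shows "tensor_op n r ops w u =
    ops a (w ! a) (u ! a) * ops (Suc a) (w ! Suc a) (u ! Suc a) * tensor_rest r a ops w u"
  using assms prod_lessThan_split_adjacent[OF assms(1)] by (simp add: tensor_op_def tensor_rest_def)

lemma tensor_op_commutes_hecke: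
  assumes a: "Suc a < r" and G: "two_site_commuting (\<lambda>x y x' y'. G x x' * G y y')"
  shows "commutes_hecke_at n r a (tensor_op n r (\<lambda>p. G))"
proof (rule commutes_hecke_at_cong[OF a])
  show "commutes_hecke_at n r a
      (\<lambda>w u. (G (w ! a) (u ! a) * G (w ! Suc a) (u ! Suc a)) * tensor_rest r a (\<lambda>p. G) w u)"
    by (rule commutes_hecke_at_product[OF a G, where R = "tensor_rest r a (\<lambda>p. G)"])
      (simp_all add: tensor_rest_swap_adj[OF a])
qed (simp add: tensor_op_eq_tensor_rest[OF a])

text \<open>The \<open>r\<close>-fold coproduct \<open>\<Sum>\<^sub>j L \<otimes> \<dots> \<otimes> L \<otimes> M \<otimes> R \<otimes> \<dots> \<otimes> R\<close>: on factors \<open>a, a + 1\<close> each summand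
  restricts to \<open>L \<otimes> L\<close> or \<open>R \<otimes> R\<close>, except the two summands \<open>j = a, a + 1\<close>, which together restrict
  to \<open>M \<otimes> R + L \<otimes> M\<close>.\<close>

lemma coproduct_commutes_hecke:
  assumes a: "Suc a < r"
    and L: "two_site_commuting (\<lambda>x y x' y'. L x x' * L y y')"
    and R: "two_site_commuting (\<lambda>x y x' y'. R x x' * R y y')"
    and M: "two_site_commuting (\<lambda>x y x' y'. M x x' * R y y' + L x x' * M y y')"
  shows "commutes_hecke_at n r a (\<lambda>w u. \<Sum>j<r. tensor_op n r (delta_factors L M R j) w u)"
proof -
  let ?P = "{..<r} - {a, Suc a}"
  let ?F = "delta_factors L M R"
  define B where "B j = (if j < a then (\<lambda>x y x' y'. R x x' * R y y') else (\<lambda>x y x' y'. L x x' * L y y'))"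
    for j
  define BM where "BM = (\<lambda>x y x' y'. M x x' * R y y' + L x x' * M y y')"
  have "commutes_hecke_at n r a (\<lambda>w u.
      (\<Sum>j\<in>?P. B j (w ! a) (w ! Suc a) (u ! a) (u ! Suc a) * tensor_rest r a (?F j) w u) +
      BM (w ! a) (w ! Suc a) (u ! a) (u ! Suc a) * tensor_rest r a (?F a) w u)"
  proof (intro commutes_hecke_at_add commutes_hecke_at_sum)
    fix j
    have "two_site_commuting (B j)" using L R by (simp add: B_def)
    thus "commutes_hecke_at n r a
        (\<lambda>w u. B j (w ! a) (w ! Suc a) (u ! a) (u ! Suc a) * tensor_rest r a (?F j) w u)"
      by (rule commutes_hecke_at_product[OF a, where R = "tensor_rest r a (?F j)"])
        (simp_all add: tensor_rest_swap_adj[OF a])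
  next
    show "commutes_hecke_at n r a
        (\<lambda>w u. BM (w ! a) (w ! Suc a) (u ! a) (u ! Suc a) * tensor_rest r a (?F a) w u)"
      by (rule commutes_hecke_at_product[OF a M[folded BM_def], where R = "tensor_rest r a (?F a)"])
        (simp_all add: tensor_rest_swap_adj[OF a])
  qed
  thus ?thesis
  proof (rule commutes_hecke_at_cong[OF a])
    fix w u assume w: "w \<in> zwords n r" and u: "u \<in> zwords n r"
    have rest: "tensor_rest r a (?F (Suc a)) w u = tensor_rest r a (?F a) w u"
      unfolding tensor_rest_def by (rule prod.cong) (auto simp: delta_factors_def)
    have "(\<Sum>j<r. tensor_op n r (?F j) w u) =
        (\<Sum>j\<in>?P. tensor_op n r (?F j) w u) + (tensor_op n r (?F a) w u + tensor_op n r (?F (Suc a)) w u)"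
      by (rule sum_lessThan_split_adjacent[OF a])
    also have "(\<Sum>j\<in>?P. tensor_op n r (?F j) w u) =
        (\<Sum>j\<in>?P. B j (w ! a) (w ! Suc a) (u ! a) (u ! Suc a) * tensor_rest r a (?F j) w u)"
      by (rule sum.cong) (auto simp: tensor_op_eq_tensor_rest[OF a w u] delta_factors_def B_def)
    also have "tensor_op n r (?F a) w u + tensor_op n r (?F (Suc a)) w u =
        BM (w ! a) (w ! Suc a) (u ! a) (u ! Suc a) * tensor_rest r a (?F a) w u"
      unfolding tensor_op_eq_tensor_rest[OF a w u] rest
      by (simp add: delta_factors_def BM_def algebra_simps)
    finally show "(\<Sum>j\<in>?P. B j (w ! a) (w ! Suc a) (u ! a) (u ! Suc a) * tensor_rest r a (?F j) w u) +
        BM (w ! a) (w ! Suc a) (u ! a) (u ! Suc a) * tensor_rest r a (?F a) w u =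
        (\<Sum>j<r. tensor_op n r (?F j) w u)" by simp
  qed
qed

section \<open>The images of the generators\<close>

lemma vunit_apply: "vunit a m = (if m = a then 1 else 0)"
  by (simp add: vunit_def)

lemma matE_apply: "matE a b k m = (if k = b \<and> m = a then 1 else 0)"
  by (simp add: matE_def vunit_def)

lemma matK_apply: "matK i k m = (if k \<noteq> i \<and> m = k then 1 else 0)"
  by (simp add: matK_def vunit_def)

lemma two_site_commuting_vunit: "two_site_commuting (\<lambda>x y x' y'. vunit x x' * vunit y y')"
  unfolding two_site_commuting_def vunit_apply by auto

lemma two_site_commuting_matK: "two_site_commuting (\<lambda>x y x' y'. matK c x x' * matK c y y')"
  unfolding two_site_commuting_def matK_apply by auto

lemma two_site_commuting_e:
  "two_site_commuting (\<lambda>x y x' y'. matE i (Suc i) x x' * matK i y y' + vunit x x' * matE i (Suc i) y y')"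
  unfolding two_site_commuting_def matK_apply matE_apply vunit_apply by auto

lemma two_site_commuting_f:
  "two_site_commuting (\<lambda>x y x' y'. matE (Suc i) i x x' * vunit y y' + matK (Suc i) x x' * matE (Suc i) i y y')"
  unfolding two_site_commuting_def matK_apply matE_apply vunit_apply by auto

lemma sum_restrict_content:
  "finite S \<Longrightarrow> (\<Sum>l\<in>S. restrict_content n l T w u) = (if content n w \<in> S then T w u else 0)"
  by (simp add: restrict_content_def sum.delta')

lemma finite_Lambda: "finite (Lambda n r)"
proof (rule finite_subset[OF _ finite_lists_length_eq[of "{0..r}" n]])
  show "Lambda n r \<subseteq> {xs. set xs \<subseteq> {0..r} \<and> length xs = n}"
    by (auto simp: Lambda_def member_le_sum_list)
qed simp

lemma supported_tensor_op: "supported n r (tensor_op n r ops)"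
  by (simp add: supported_def tensor_op_def)

lemma supported_sum: "(\<And>j. j \<in> J \<Longrightarrow> supported n r (T j)) \<Longrightarrow> supported n r (\<lambda>w u. \<Sum>j\<in>J. T j w u)"
  by (simp add: supported_def)

lemma eA_eq_restrict_content:
  assumes L: "l \<in> Lambda n r" and co: "colsum n A = l" and ne: "matrix_words n r A \<noteq> {}"
    and sp: "supported n r T" and comm: "\<And>a. Suc a < r \<Longrightarrow> commutes_hecke_at n r a T"
    and val: "\<And>u. T (xi l) u = (if u \<in> matrix_words n r A then 1 else 0)"
  shows "eA n r A = restrict_content n l T"
proof (rule eA_eqI, rule schur_propI)
  have coL: "colsum n A \<in> Lambda n r" using co L by simp
  have ro: "rowsum n A \<in> Lambda n r" using ne rowsum_in_Lambda[OF coL] by blast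
  show "supported n r (restrict_content n l T)"
    using sp by (simp add: supported_def restrict_content_def)
  show "commutes_hecke_at n r a (restrict_content n l T)" if "Suc a < r" for a
    using commutes_hecke_at_restrict_content[OF that comm[OF that]] .
  fix \<nu> assume N: "\<nu> \<in> Lambda n r"
  show "restrict_content n l T (xi \<nu>) = (if colsum n A = \<nu>
      then (\<lambda>u. \<Sum>x\<in>dcoset n r A (dA n r A). hperm n r (zbvec (xi (rowsum n A))) x u) else (\<lambda>_. 0))"
    using content_xi[OF N] co val sum_dcoset_hperm_xi[OF ro coL ne]
    by (auto simp: restrict_content_def)
qed

definition shift_matrix :: "nat list \<Rightarrow> nat \<Rightarrow> nat \<Rightarrow> nat \<Rightarrow> nat \<Rightarrow> nat" where
  "shift_matrix l b c = (\<lambda>a b'. diagm l a b' - unitm b b a b' + unitm c b a b')"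

lemma shift_matrix_entry:
  assumes L: "l \<in> Lambda n r" and bc: "b \<noteq> c" and a: "a \<in> {1..n}" and b': "b' \<in> {1..n}"
  shows "shift_matrix l b c a b' = (if a = b' then l ! (a - 1) - (if a = b then 1 else 0) else 0) + (if a = c \<and> b' = b then 1 else 0)"
  using L bc a b' by (auto simp: shift_matrix_def diagm_def unitm_def Lambda_def)

lemma card_positions_xi: assumes L: "l \<in> Lambda n r" and j: "j \<in> {1..n}"
  shows "card {k. k < r \<and> xi l ! k = j} = l ! (j - 1)"
  using count_list_eq_card[of "xi l" j] count_list_xi[OF L, of j] length_xi[OF L] j by simp

lemma colsum_shift_matrix:
  assumes L: "l \<in> Lambda n r" and bc: "b \<noteq> c" and b: "b \<in> {1..n}" and c: "c \<in> {1..n}" and lb: "1 \<le> l ! (b - 1)"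
  shows "colsum n (shift_matrix l b c) = l"
proof (rule nth_equalityI)
  show "length (colsum n (shift_matrix l b c)) = length l" using L by (simp add: colsum_def Lambda_def)
next
  fix k assume "k < length (colsum n (shift_matrix l b c))"
  hence k: "Suc k \<in> {1..n}" by (simp add: colsum_def)
  have "colsum n (shift_matrix l b c) ! k = (\<Sum>a=1..n. shift_matrix l b c a (Suc k))" using colsum_nth[OF k] by simp
  also have "\<dots> = (\<Sum>a=1..n. (if a = Suc k then l ! (a - 1) - (if a = b then 1 else 0) else 0) + (if a = c \<and> Suc k = b then 1 else 0))"
    by (rule sum.cong[OF refl]) (use shift_matrix_entry[OF L bc _ k] in simp)
  also have "\<dots> = (l ! k - (if Suc k = b then 1 else 0)) + (if Suc k = b then 1 else 0)"
    using k c by (simp add: sum.distrib)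
  also have "\<dots> = l ! k" using lb by auto
  finally show "colsum n (shift_matrix l b c) ! k = l ! k" .
qed

lemma matrix_word_entry_pos:
  assumes co: "colsum n A \<in> Lambda n r" and u: "u \<in> matrix_words n r A" and k: "k < r"
  shows "0 < A (u ! k) (xi (colsum n A) ! k)"
proof -
  have "u ! k \<in> {1..n}" "xi (colsum n A) ! k \<in> {1..n}"
    using u zwordsD(2)[OF xi_zwords[OF co] k] zwordsD(2)[of u n r k] k by (auto simp: matrix_words_def)
  hence "A (u ! k) (xi (colsum n A) ! k) =
      card {k'. k' < r \<and> xi (colsum n A) ! k' = xi (colsum n A) ! k \<and> u ! k' = u ! k}"
    using u by (simp add: matrix_words_def)
  also have "\<dots> > 0" using k by (auto simp: card_gt_0_iff)
  finally show ?thesis .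
qed

lemma matrix_words_shift_matrix_subset:
  assumes L: "l \<in> Lambda n r" and bc: "b \<noteq> c" and b: "b \<in> {1..n}" and c: "c \<in> {1..n}"
    and lb: "1 \<le> l ! (b - 1)" and u: "u \<in> matrix_words n r (shift_matrix l b c)"
  shows "\<exists>j<r. xi l ! j = b \<and> u = (xi l)[j := c]"
proof -
  let ?A = "shift_matrix l b c" and ?x = "xi l"
  have cs: "colsum n ?A = l" using colsum_shift_matrix[OF L bc b c lb] .
  have uz: "u \<in> zwords n r" using u by (simp add: matrix_words_def)
  have unchanged: "u ! k = ?x ! k" if k: "k < r" "\<not> (?x ! k = b \<and> u ! k = c)" for k
    using matrix_word_entry_pos[of n ?A r u k, unfolded cs, OF L u k(1)] k(2)
      shift_matrix_entry[OF L bc zwordsD(2)[OF uz k(1)] zwordsD(2)[OF xi_zwords[OF L] k(1)]]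
    by (auto split: if_splits)
  have "card {k. k < r \<and> ?x ! k = b \<and> u ! k = c} = ?A c b"
    using u cs b c by (simp add: matrix_words_def)
  also have "\<dots> = 1" using shift_matrix_entry[OF L bc c b] bc by simp
  finally obtain j where j: "{k. k < r \<and> ?x ! k = b \<and> u ! k = c} = {j}"
    using card_1_singletonE by blast
  hence jr: "j < r" "?x ! j = b" "u ! j = c" by auto
  have "u ! k = ?x[j := c] ! k" if k: "k < r" for k
  proof (cases "k = j")
    case True
    thus ?thesis using jr length_xi[OF L] by simp
  next
    case False
    hence "\<not> (?x ! k = b \<and> u ! k = c)" using j k by blast
    thus ?thesis using unchanged[OF k] False by simp
  qed
  hence "u = ?x[j := c]" using zwordsD(1)[OF uz] length_xi[OF L] by (simp add: list_eq_iff_nth_eq)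
  thus ?thesis using jr by blast
qed

lemma update_xi_in_matrix_words:
  assumes L: "l \<in> Lambda n r" and bc: "b \<noteq> c" and b: "b \<in> {1..n}" and c: "c \<in> {1..n}"
    and lb: "1 \<le> l ! (b - 1)" and j: "j < r" "xi l ! j = b"
  shows "(xi l)[j := c] \<in> matrix_words n r (shift_matrix l b c)"
proof -
  let ?A = "shift_matrix l b c" and ?x = "xi l" and ?u = "(xi l)[j := c]"
  have lx: "length ?x = r" using length_xi[OF L] .
  have "?u \<in> zwords n r"
    using xi_zwords[OF L] c unfolding zwords_def by (auto dest: set_update_subset_insert[THEN subsetD])
  moreover have "?A i' j' = card {k. k < r \<and> ?x ! k = j' \<and> ?u ! k = i'}"
    if ij: "i' \<in> {1..n}" "j' \<in> {1..n}" for i' j'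
  proof (cases "i' = j'")
    case True
    have "{k. k < r \<and> ?x ! k = j' \<and> ?u ! k = i'} = {k. k < r \<and> ?x ! k = j'} - (if j' = b then {j} else {})"
      using True j bc lx by (auto simp: nth_list_update)
    moreover have "card ({k. k < r \<and> ?x ! k = j'} - (if j' = b then {j} else {})) =
        l ! (j' - 1) - (if j' = b then 1 else 0)"
      using card_positions_xi[OF L ij(2)] j by (auto simp: card_Diff_singleton)
    ultimately show ?thesis using shift_matrix_entry[OF L bc ij] True bc by auto
  next
    case False
    have "{k. k < r \<and> ?x ! k = j' \<and> ?u ! k = i'} = (if j' = b \<and> i' = c then {j} else {})"
      using False j lx by (auto simp: nth_list_update)
    thus ?thesis using shift_matrix_entry[OF L bc ij] False by auto
  qed
  ultimately show ?thesis using colsum_shift_matrix[OF L bc b c lb] by (simp add: matrix_words_def)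
qed

lemma matrix_words_shift_matrix:
  assumes "l \<in> Lambda n r" "b \<noteq> c" "b \<in> {1..n}" "c \<in> {1..n}" "1 \<le> l ! (b - 1)"
  shows "matrix_words n r (shift_matrix l b c) = {u. \<exists>j<r. xi l ! j = b \<and> u = (xi l)[j := c]}"
  using matrix_words_shift_matrix_subset[OF assms] update_xi_in_matrix_words[OF assms] by blast

lemma matrix_words_shift_matrix_nonempty:
  assumes L: "l \<in> Lambda n r" and bc: "b \<noteq> c" and b: "b \<in> {1..n}" and c: "c \<in> {1..n}" and lb: "1 \<le> l ! (b - 1)"
  shows "matrix_words n r (shift_matrix l b c) \<noteq> {}"
proof -
  have "card {k. k < r \<and> xi l ! k = b} \<noteq> 0" using card_positions_xi[OF L b] lb by simp
  then obtain j where "j < r" "xi l ! j = b" by (metis (mono_tags, lifting) Collect_empty_eq card.empty)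
  thus ?thesis unfolding matrix_words_shift_matrix[OF L bc b c lb] by blast
qed

lemma diagm_entry: assumes L: "\<mu> \<in> Lambda n r" and a: "a \<in> {1..n}"
  shows "diagm \<mu> a b' = (if a = b' then \<mu> ! (a - 1) else 0)"
  using L a by (auto simp: diagm_def Lambda_def)

lemma colsum_diagm: assumes L: "\<mu> \<in> Lambda n r" shows "colsum n (diagm \<mu>) = \<mu>"
proof (rule nth_equalityI)
  show "length (colsum n (diagm \<mu>)) = length \<mu>" using L by (simp add: colsum_def Lambda_def)
next
  fix k assume "k < length (colsum n (diagm \<mu>))"
  hence k: "Suc k \<in> {1..n}" by (simp add: colsum_def)
  have "colsum n (diagm \<mu>) ! k = (\<Sum>a=1..n. diagm \<mu> a (Suc k))" using colsum_nth[OF k] by simp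
  also have "\<dots> = (\<Sum>a=1..n. if a = Suc k then \<mu> ! (a - 1) else 0)"
    by (rule sum.cong[OF refl]) (use diagm_entry[OF L] in simp)
  also have "\<dots> = \<mu> ! k" using k by simp
  finally show "colsum n (diagm \<mu>) ! k = \<mu> ! k" .
qed

lemma matrix_words_diagm:
  assumes L: "\<mu> \<in> Lambda n r"
  shows "matrix_words n r (diagm \<mu>) = {xi \<mu>}"
proof (intro set_eqI iffI)
  let ?x = "xi \<mu>"
  have cs: "colsum n (diagm \<mu>) = \<mu>" using colsum_diagm[OF L] .
  have xz: "?x \<in> zwords n r" and lx: "length ?x = r" using xi_zwords[OF L] length_xi[OF L] by auto
  fix u
  show "u \<in> {?x}" if u: "u \<in> matrix_words n r (diagm \<mu>)"
  proof -
    have uz: "u \<in> zwords n r" using u by (simp add: matrix_words_def)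
    have "u ! k = ?x ! k" if k: "k < r" for k
      using matrix_word_entry_pos[of n "diagm \<mu>" r u k, unfolded cs, OF L u k]
        diagm_entry[OF L zwordsD(2)[OF uz k]] by (simp split: if_splits)
    thus ?thesis using zwordsD(1)[OF uz] lx by (simp add: list_eq_iff_nth_eq)
  qed
  show "u \<in> matrix_words n r (diagm \<mu>)" if "u \<in> {?x}"
  proof -
    have "diagm \<mu> i' j' = card {k. k < r \<and> ?x ! k = j' \<and> ?x ! k = i'}"
      if ij: "i' \<in> {1..n}" "j' \<in> {1..n}" for i' j'
      using card_positions_xi[OF L ij(2)] diagm_entry[OF L ij(1)] by (cases "i' = j'") auto
    thus ?thesis using that xz cs by (simp add: matrix_words_def)
  qed
qed

lemma prod_indicator:
  "(\<Prod>p<(r::nat). if Q p then 1 else 0) = (if \<forall>p<r. Q p then 1 else (0::complex))"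
  by (auto simp: prod_zero_iff)

lemma sum_indicator_unique:
  assumes "\<And>j j'. j < r \<Longrightarrow> j' < r \<Longrightarrow> C j \<Longrightarrow> C j' \<Longrightarrow> j = j'"
  shows "(\<Sum>j<(r::nat). if C j then 1 else 0::complex) = (if \<exists>j<r. C j then 1 else 0)"
proof (cases "\<exists>j<r. C j")
  case True
  then obtain j0 where j0: "j0 < r" "C j0" by blast
  have "(\<Sum>j<r. if C j then 1 else 0::complex) = (\<Sum>j<r. if j = j0 then 1 else 0)"
    by (rule sum.cong) (use assms j0 in auto)
  thus ?thesis using True j0 by simp
qed simp

lemma tensor_op_eq_0:
  assumes "p < r" "ops p (w ! p) (u ! p) = 0"
  shows "tensor_op n r ops w u = 0"
  using assms by (auto simp: tensor_op_def prod_zero_iff)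

text \<open>In \<open>\<xi>\<^sub>l\<close> all letters left of a letter \<open>b\<close> are \<open>\<le> b\<close> and all letters right of it are \<open>\<ge> b\<close>, so
  the factors \<open>L\<close> and \<open>R\<close> act as the identity there.\<close>

lemma tensor_op_delta_factors_xi:
  assumes L: "l \<in> Lambda n r" and c: "c \<in> {1..n}" and j: "j < r"
    and Lf: "\<And>k. k \<le> b \<Longrightarrow> Lf k = vunit k" and Rf: "\<And>k. b \<le> k \<Longrightarrow> Rf k = vunit k"
  shows "tensor_op n r (delta_factors Lf (matE c b) Rf j) (xi l) u =
    (if xi l ! j = b \<and> u = (xi l)[j := c] then 1 else 0)"
proof -
  let ?x = "xi l"
  have xz: "?x \<in> zwords n r" and lx: "length ?x = r" and sx: "sorted ?x"
    using xi_zwords[OF L] length_xi[OF L] sorted_xi[OF L] by auto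
  have uz: "u \<in> zwords n r" if "?x ! j = b" "u = ?x[j := c]"
    using that xz c lx unfolding zwords_def by (auto dest: set_update_subset_insert[THEN subsetD])
  show ?thesis
  proof (cases "?x ! j = b")
    case False
    have "tensor_op n r (delta_factors Lf (matE c b) Rf j) ?x u = 0"
      by (rule tensor_op_eq_0[OF j]) (simp add: delta_factors_def matE_apply False)
    thus ?thesis using False by simp
  next
    case xj: True
    show ?thesis
    proof (cases "u \<in> zwords n r")
      case False
      thus ?thesis using uz xj by (auto simp: tensor_op_def)
    next
      case True
      have "delta_factors Lf (matE c b) Rf j p (?x ! p) (u ! p) =
          (if u ! p = ?x[j := c] ! p then 1 else 0)" if p: "p < r" for p
      proof -
        have "p < j \<Longrightarrow> ?x ! p \<le> b" "j < p \<Longrightarrow> b \<le> ?x ! p"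
          using sorted_nth_mono[OF sx] xj j p lx by (metis less_imp_le)+
        thus ?thesis using Lf Rf lx p xj
          by (auto simp: delta_factors_def matE_apply vunit_apply nth_list_update)
      qed
      hence "tensor_op n r (delta_factors Lf (matE c b) Rf j) ?x u =
          (\<Prod>p<r. if u ! p = ?x[j := c] ! p then 1 else 0)"
        using xz True by (simp add: tensor_op_def)
      also have "\<dots> = (if u = ?x[j := c] then 1 else 0)"
        using zwordsD(1)[OF True] lx by (simp add: prod_indicator list_eq_iff_nth_eq)
      finally show ?thesis using xj by simp
    qed
  qed
qed

lemma coproduct_xi:
  assumes L: "l \<in> Lambda n r" and bc: "b \<noteq> c" and c: "c \<in> {1..n}"
    and Lf: "\<And>k. k \<le> b \<Longrightarrow> Lf k = vunit k" and Rf: "\<And>k. b \<le> k \<Longrightarrow> Rf k = vunit k"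
  shows "(\<Sum>j<r. tensor_op n r (delta_factors Lf (matE c b) Rf j) (xi l) u) =
    (if \<exists>j<r. xi l ! j = b \<and> u = (xi l)[j := c] then 1 else 0)"
proof -
  have "(\<Sum>j<r. tensor_op n r (delta_factors Lf (matE c b) Rf j) (xi l) u) =
      (\<Sum>j<r. if xi l ! j = b \<and> u = (xi l)[j := c] then 1 else 0)"
    by (rule sum.cong) (simp_all add: tensor_op_delta_factors_xi[OF L c _ Lf Rf])
  also have "\<dots> = (if \<exists>j<r. xi l ! j = b \<and> u = (xi l)[j := c] then 1 else 0)"
    using bc length_xi[OF L] by (intro sum_indicator_unique) (metis nth_list_update_eq nth_list_update_neq)
  finally show ?thesis .
qed

lemma coproduct_eq_0:
  assumes "b \<notin> set w"
  shows "(\<Sum>j<r. tensor_op n r (delta_factors Lf (matE c b) Rf j) w u) = 0"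
proof (rule sum.neutral, intro ballI)
  fix j assume j: "j \<in> {..<r}"
  show "tensor_op n r (delta_factors Lf (matE c b) Rf j) w u = 0"
  proof (cases "w \<in> zwords n r")
    case True
    hence "w ! j \<noteq> b" using assms j zwordsD(1) by (metis lessThan_iff nth_mem)
    thus ?thesis using j by (intro tensor_op_eq_0[of j]) (auto simp: delta_factors_def matE_apply)
  qed (simp add: tensor_op_def)
qed

lemma eA_shift_matrix:
  assumes L: "l \<in> Lambda n r" and bc: "b \<noteq> c" and b: "b \<in> {1..n}" and c: "c \<in> {1..n}"
    and lb: "1 \<le> l ! (b - 1)"
    and Lf: "\<And>k. k \<le> b \<Longrightarrow> Lf k = vunit k" and Rf: "\<And>k. b \<le> k \<Longrightarrow> Rf k = vunit k"
    and tL: "two_site_commuting (\<lambda>x y x' y'. Lf x x' * Lf y y')"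
    and tR: "two_site_commuting (\<lambda>x y x' y'. Rf x x' * Rf y y')"
    and tM: "two_site_commuting (\<lambda>x y x' y'. matE c b x x' * Rf y y' + Lf x x' * matE c b y y')"
  shows "eA n r (shift_matrix l b c) =
    restrict_content n l (\<lambda>w u. \<Sum>j<r. tensor_op n r (delta_factors Lf (matE c b) Rf j) w u)"
  using coproduct_xi[OF L bc c Lf Rf]
  by (intro eA_eq_restrict_content[OF L colsum_shift_matrix[OF L bc b c lb]
        matrix_words_shift_matrix_nonempty[OF L bc b c lb]] supported_sum supported_tensor_op
        coproduct_commutes_hecke[OF _ tL tR tM])
    (simp_all add: matrix_words_shift_matrix[OF L bc b c lb])

lemma eA_diagm:
  assumes L: "\<mu> \<in> Lambda n r"
  shows "eA n r (diagm \<mu>) = restrict_content n \<mu> (tensor_op n r (\<lambda>p. vunit))"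
proof (rule eA_eq_restrict_content[OF L colsum_diagm[OF L]])
  show "tensor_op n r (\<lambda>p. vunit) (xi \<mu>) u = (if u \<in> matrix_words n r (diagm \<mu>) then 1 else 0)" for u
  proof (cases "u \<in> zwords n r")
    case True
    thus ?thesis using xi_zwords[OF L] length_xi[OF L] zwordsD(1)[OF True]
      by (auto simp: matrix_words_diagm[OF L] tensor_op_def vunit_apply prod_indicator list_eq_iff_nth_eq)
  next
    case False
    thus ?thesis using xi_zwords[OF L] by (auto simp: matrix_words_diagm[OF L] tensor_op_def)
  qed
qed (simp_all add: matrix_words_diagm[OF L] supported_tensor_op
      tensor_op_commutes_hecke two_site_commuting_vunit)

lemma sum_eA_shift_matrix:
  assumes bc: "b \<noteq> c" and b: "b \<in> {1..n}" and c: "c \<in> {1..n}"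
    and Lf: "\<And>k. k \<le> b \<Longrightarrow> Lf k = vunit k" and Rf: "\<And>k. b \<le> k \<Longrightarrow> Rf k = vunit k"
    and tL: "two_site_commuting (\<lambda>x y x' y'. Lf x x' * Lf y y')"
    and tR: "two_site_commuting (\<lambda>x y x' y'. Rf x x' * Rf y y')"
    and tM: "two_site_commuting (\<lambda>x y x' y'. matE c b x x' * Rf y y' + Lf x x' * matE c b y y')"
  shows "(\<lambda>w u. \<Sum>l\<in>{l\<in>Lambda n r. 1 \<le> l ! (b - 1)}. eA n r (shift_matrix l b c) w u) =
    (\<lambda>w u. \<Sum>j<r. tensor_op n r (delta_factors Lf (matE c b) Rf j) w u)"
proof (intro ext)
  fix w u
  let ?S = "{l\<in>Lambda n r. 1 \<le> l ! (b - 1)}"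
  let ?T = "\<lambda>w u. \<Sum>j<r. tensor_op n r (delta_factors Lf (matE c b) Rf j) w u"
  have "(\<Sum>l\<in>?S. eA n r (shift_matrix l b c) w u) = (\<Sum>l\<in>?S. restrict_content n l ?T w u)"
    by (rule sum.cong) (simp_all add: eA_shift_matrix[OF _ bc b c _ Lf Rf tL tR tM])
  also have "\<dots> = (if content n w \<in> ?S then ?T w u else 0)"
    using finite_Lambda by (simp add: sum_restrict_content)
  also have "\<dots> = ?T w u"
  proof (cases "w \<in> zwords n r")
    case True
    hence "content n w \<notin> ?S \<Longrightarrow> b \<notin> set w"
      using b content_in_Lambda[OF True] nth_content[OF b, of w] by (simp add: count_list_0_iff Suc_le_eq)
    thus ?thesis using coproduct_eq_0 by auto
  qed (simp add: tensor_op_def)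
  finally show "(\<Sum>l\<in>?S. eA n r (shift_matrix l b c) w u) = ?T w u" .
qed

lemma psi_e_eq_schur_e:
  assumes "i \<in> {1..<n}"
  shows "psi_e n r i = schur_e n r i"
proof -
  have "schur_e n r i =
      (\<lambda>w u. \<Sum>l\<in>{l\<in>Lambda n r. 1 \<le> l ! (Suc i - 1)}. eA n r (shift_matrix l (Suc i) i) w u)"
    by (simp add: schur_e_def shift_matrix_def)
  also have "\<dots> = (\<lambda>w u. \<Sum>j<r. tensor_op n r (delta_factors vunit (matE i (Suc i)) (matK i) j) w u)"
    using assms
    by (intro sum_eA_shift_matrix two_site_commuting_vunit two_site_commuting_matK two_site_commuting_e)
      (auto simp: matK_def)
  also have "\<dots> = psi_e n r i" unfolding psi_e_def delta_factors_def Suc_eq_plus1 ..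
  finally show ?thesis ..
qed

lemma psi_f_eq_schur_f:
  assumes "i \<in> {1..<n}"
  shows "psi_f n r i = schur_f n r i"
proof -
  have "schur_f n r i =
      (\<lambda>w u. \<Sum>l\<in>{l\<in>Lambda n r. 1 \<le> l ! (i - 1)}. eA n r (shift_matrix l i (Suc i)) w u)"
    by (simp add: schur_f_def shift_matrix_def)
  also have "\<dots> = (\<lambda>w u. \<Sum>j<r. tensor_op n r (delta_factors (matK (Suc i)) (matE (Suc i) i) vunit j) w u)"
    using assms
    by (intro sum_eA_shift_matrix two_site_commuting_vunit two_site_commuting_matK two_site_commuting_f)
      (auto simp: matK_def)
  also have "\<dots> = psi_f n r i" unfolding psi_f_def delta_factors_def Suc_eq_plus1 ..
  finally show ?thesis ..
qed

lemma psi_k_eq_sum_k_mu: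
  assumes i: "i \<in> {1..n}"
  shows "psi_k n r i = (\<lambda>w u. \<Sum>\<mu>\<in>{\<mu>\<in>Lambda n r. \<mu> ! (i - 1) = 0}. k_mu n r \<mu> w u)"
proof (intro ext)
  fix w u
  let ?S = "{\<mu>\<in>Lambda n r. \<mu> ! (i - 1) = 0}"
  have "(\<Sum>\<mu>\<in>?S. k_mu n r \<mu> w u) = (\<Sum>\<mu>\<in>?S. restrict_content n \<mu> (tensor_op n r (\<lambda>p. vunit)) w u)"
    by (rule sum.cong) (simp_all add: k_mu_def eA_diagm)
  also have "\<dots> = (if content n w \<in> ?S then tensor_op n r (\<lambda>p. vunit) w u else 0)"
    using finite_Lambda by (simp add: sum_restrict_content)
  also have "\<dots> = psi_k n r i w u"
  proof (cases "w \<in> zwords n r \<and> u \<in> zwords n r")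
    case True
    hence "content n w \<in> ?S \<longleftrightarrow> (\<forall>p<r. w ! p \<noteq> i)"
      using content_in_Lambda[of w n r] nth_content[OF i, of w] zwordsD(1)[of w n r]
      by (auto simp: count_list_0_iff in_set_conv_nth)
    thus ?thesis using True
      by (auto simp: psi_k_def tensor_op_def vunit_apply matK_apply prod_indicator)
  qed (auto simp: psi_k_def tensor_op_def)
  finally show "psi_k n r i w u = (\<Sum>\<mu>\<in>?S. k_mu n r \<mu> w u)" by simp
qed

theorem mainTheorem9:
  fixes n r :: nat
  shows "(\<forall>i\<in>{1..<n}. psi_e n r i = schur_e n r i \<and> psi_f n r i = schur_f n r i) \<and>
         (\<forall>i\<in>{1..n}. psi_k n r i =
             (\<lambda>w u. \<Sum>\<mu>\<in>{\<mu>\<in>Lambda n r. \<mu> ! (i - 1) = 0}. k_mu n r \<mu> w u))"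
  using psi_e_eq_schur_e psi_f_eq_schur_f psi_k_eq_sum_k_mu by blast

end
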